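(* Let $k=0$ and $f_r(x)=x^2\exp(r-x)$. For every $r\in[2.6,2.9]$, \[ f_r^2(2)<f_r^3(2)<2<f_r(2), \] and, in consequence, $f_r$ (as a self-map of the compact interval $[f_r^2(2),f_r(2)]$) is chaotic in the sense of Li and Yorke, in the sense of Block and Coppel, and in the sense of Devaney.
   Context: Let $X$ be a compact metric space and $f\colon X\to X$ continuous. (Li–Yorke) $f$ is L/Y-chaotic if there is an uncountable $S\subset X$ such that for all $x\neq y$ in $S$: $\limsup_n d(f^n x,f^n y)>0$ and $\liminf_n d(f^n x,f^n y)=0$, and for all $x\in S$ and all periodic $p\in X$: $\limsup_n d(f^n x,f^n p)>0$. (Block–Coppel) $f$ is B/C-chaotic if there are $m\in\mathbb{N}$, a compact $f^m$-invariant $Y\subset X$ and a continuous surjection $h\colon Y\to\Sigma$ with $h\circ f^m=\sigma\circ h$ on $Y$, where $\Sigma=\{0,1\}^{\mathbb{N}}$ with metric $d(\alpha,\beta)=\sum_{i\ge0}|a_i-b_i|/2^i$ and $\sigma$ is the left shift. (Devaney) $f$ is D-chaotic if there is a compact invariant $Y\subset X$ such that $f|_Y$ is topologically transitive, periodic points of $f|_Y$ are dense in $Y$, and $f|_Y$ has sensitive dependence on initial conditions. *)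

theory Defs
  imports "HOL-Analysis.Analysis" "HOL-Library.Liminf_Limsup"
begin

definition fr :: "real \<Rightarrow> real \<Rightarrow> real" where
  "fr r x = x\<^sup>2 * exp (r - x)"

definition periodic_pt :: "('a \<Rightarrow> 'a) \<Rightarrow> 'a \<Rightarrow> bool" where
  "periodic_pt f p \<longleftrightarrow> (\<exists>n>0. (f ^^ n) p = p)"

definition LY_chaotic :: "'a::metric_space set \<Rightarrow> ('a \<Rightarrow> 'a) \<Rightarrow> bool" where
  "LY_chaotic X f \<longleftrightarrow>
     (\<exists>S \<subseteq> X. uncountable S \<and>
        (\<forall>x\<in>S. \<forall>y\<in>S. x \<noteq> y \<longrightarrow>
           limsup (\<lambda>n. ereal (dist ((f ^^ n) x) ((f ^^ n) y))) > 0 \<and>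
           liminf (\<lambda>n. ereal (dist ((f ^^ n) x) ((f ^^ n) y))) = 0) \<and>
        (\<forall>x\<in>S. \<forall>p\<in>X. periodic_pt f p \<longrightarrow>
           limsup (\<lambda>n. ereal (dist ((f ^^ n) x) ((f ^^ n) p))) > 0))"

text \<open>The full one-sided 2-shift: sequences in {0,1} (encoded as nat => bool),
  with metric d(a,b) = sum_i |a_i - b_i| / 2^i, and the left shift.\<close>
definition shift_dist :: "(nat \<Rightarrow> bool) \<Rightarrow> (nat \<Rightarrow> bool) \<Rightarrow> real" where
  "shift_dist a b = (\<Sum>i. \<bar>of_bool (a i) - of_bool (b i)\<bar> / 2 ^ i)"

definition shift :: "(nat \<Rightarrow> bool) \<Rightarrow> (nat \<Rightarrow> bool)" where
  "shift a = (\<lambda>i. a (Suc i))"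

definition BC_chaotic :: "'a::metric_space set \<Rightarrow> ('a \<Rightarrow> 'a) \<Rightarrow> bool" where
  "BC_chaotic X f \<longleftrightarrow>
     (\<exists>m::nat. \<exists>Y h. m \<ge> 1 \<and> Y \<subseteq> X \<and> compact Y \<and> (f ^^ m) ` Y \<subseteq> Y \<and>
        (\<forall>y\<in>Y. \<forall>e>0. \<exists>d>0. \<forall>y'\<in>Y. dist y' y < d \<longrightarrow> shift_dist (h y') (h y) < e) \<and>
        h ` Y = UNIV \<and>
        (\<forall>y\<in>Y. h ((f ^^ m) y) = shift (h y)))"

definition D_chaotic :: "'a::metric_space set \<Rightarrow> ('a \<Rightarrow> 'a) \<Rightarrow> bool" where
  "D_chaotic X f \<longleftrightarrow>
     (\<exists>Y. Y \<subseteq> X \<and> Y \<noteq> {} \<and> compact Y \<and> f ` Y \<subseteq> Y \<and>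
        (\<forall>U V. openin (top_of_set Y) U \<and> openin (top_of_set Y) V \<and> U \<noteq> {} \<and> V \<noteq> {}
           \<longrightarrow> (\<exists>n>0. (f ^^ n) ` U \<inter> V \<noteq> {})) \<and>
        Y \<subseteq> closure {p\<in>Y. periodic_pt f p} \<and>
        (\<exists>\<delta>>0. \<forall>x\<in>Y. \<forall>\<epsilon>>0. \<exists>y\<in>Y. dist x y < \<epsilon> \<and>
           (\<exists>n. dist ((f ^^ n) x) ((f ^^ n) y) > \<delta>)))"

end

theory Submission
  imports Defs
begin

(* For 2.6 <= r <= 2.9 the orbit of the critical point 2 of f = f_r satisfies f^2(2) < f^3(2) < 2 < f(2):
   each inequality is an estimate of an exponent, obtained from tangent lines of exp and Taylor bounds for
   exp at a few constants. These inequalities make [f^2(2), f(2)] invariant and give f^2 a horseshoe: two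
   disjoint intervals in [2, f(2)], on which f^2 is strictly increasing resp. decreasing, each mapped over both.
   Recording which interval the f^2-orbit of a point visits semi-conjugates f^2 on the invariant set Lambda to
   the full shift (Block-Coppel). Only countably many itineraries have a nondegenerate interval as fiber, so
   points determined by their itinerary exist for every finite itinerary; on the closure of these points f^2 is
   transitive with dense periodic points and sensitive, and together with its f-image this closure carries
   Devaney chaos. Interleaving a fixed itinerary, runs of ones and zeros, and an arbitrary binary sequence
   gives an uncountable Li-Yorke scrambled set. *)

section \<open>Iterates and maps of intervals\<close>

lemma continuous_on_funpow:
  fixes g :: "'a::topological_space \<Rightarrow> 'a"
  assumes "continuous_on UNIV g"
  shows "continuous_on UNIV (g ^^ n)"
proof (induction n)
  case (Suc n)
  have "continuous_on UNIV (g \<circ> (g ^^ n))"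
    using Suc assms by (intro continuous_on_compose) (auto intro: continuous_on_subset)
  then show ?case
    by simp
qed (simp add: continuous_on_id)

lemma funpow_fixpoint_mult:
  assumes "(g ^^ q) p = p"
  shows "(g ^^ (q * c)) p = p"
  by (induction c) (simp_all add: funpow_add assms)

lemma funpow_image_subset: "g ` X \<subseteq> X \<Longrightarrow> (g ^^ n) ` X \<subseteq> X"
  by (induction n) (auto simp: image_subset_iff)

definition strictly_monotone_on :: "real set \<Rightarrow> (real \<Rightarrow> real) \<Rightarrow> bool" where
  "strictly_monotone_on S g \<longleftrightarrow> strict_mono_on S g \<or> strict_antimono_on S g"

lemma strictly_monotone_on_subset:
  "strictly_monotone_on S g \<Longrightarrow> T \<subseteq> S \<Longrightarrow> strictly_monotone_on T g"
  unfolding strictly_monotone_on_def by (metis monotone_on_subset)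

lemma strictly_monotone_on_comp:
  assumes g: "strictly_monotone_on S g" and "g ` S \<subseteq> T" and k: "strictly_monotone_on T k"
  shows "strictly_monotone_on S (k \<circ> g)"
proof -
  have "g x \<in> T" if "x \<in> S" for x
    using assms(2) that by blast
  with g k show ?thesis
    unfolding strictly_monotone_on_def monotone_on_def by (elim disjE) auto
qed

lemma strictly_monotone_on_imp_inj_on: "strictly_monotone_on S g \<Longrightarrow> inj_on g S"
  unfolding strictly_monotone_on_def strict_antimono_iff_antimono
  by (auto intro: strict_mono_on_imp_inj_on)

lemma strictly_monotone_on_between:
  assumes "strictly_monotone_on S g" "x \<in> S" "y \<in> S" "z \<in> S" "x \<le> y" "y \<le> z"
  shows "min (g x) (g z) \<le> g y \<and> g y \<le> max (g x) (g z)"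
proof -
  from assms(1) consider "mono_on S g" | "antimono_on S g"
    unfolding strictly_monotone_on_def strict_antimono_iff_antimono
    using strict_mono_on_imp_mono_on by blast
  then show ?thesis
  proof cases
    case 1
    then have "g x \<le> g y" "g y \<le> g z"
      using assms(2-) by (auto dest: monotone_onD)
    then show ?thesis
      by linarith
  next
    case 2
    then have "g y \<le> g x" "g z \<le> g y"
      using assms(2-) by (auto dest: monotone_onD)
    then show ?thesis
      by linarith
  qed
qed

lemma endpoints_period_two_if_strictly_monotone_onto:
  assumes mono: "strictly_monotone_on {\<alpha>..\<beta>} \<phi>" and onto: "\<phi> ` {\<alpha>..\<beta>} = {\<alpha>..\<beta>}"
    and "\<alpha> \<le> \<beta>"
  shows "\<phi> (\<phi> \<alpha>) = \<alpha>" and "\<phi> (\<phi> \<beta>) = \<beta>"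
proof -
  obtain u v where u: "u \<in> {\<alpha>..\<beta>}" "\<phi> u = \<alpha>" and v: "v \<in> {\<alpha>..\<beta>}" "\<phi> v = \<beta>"
    using onto \<open>\<alpha> \<le> \<beta>\<close> by (metis atLeastAtMost_iff imageE order_refl)
  have range: "\<phi> x \<in> {\<alpha>..\<beta>}" if "x \<in> {\<alpha>..\<beta>}" for x
    using onto that by blast
  have ends: "\<alpha> \<in> {\<alpha>..\<beta>}" "\<beta> \<in> {\<alpha>..\<beta>}"
    using \<open>\<alpha> \<le> \<beta>\<close> by auto
  from mono consider "strict_mono_on {\<alpha>..\<beta>} \<phi>" | "strict_antimono_on {\<alpha>..\<beta>} \<phi>"
    unfolding strictly_monotone_on_def by blast
  then have "\<phi> \<alpha> = \<alpha> \<and> \<phi> \<beta> = \<beta> \<or> \<phi> \<alpha> = \<beta> \<and> \<phi> \<beta> = \<alpha>"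
  proof cases
    case 1
    have "\<phi> \<alpha> \<le> \<phi> u" "\<phi> v \<le> \<phi> \<beta>"
      using u v ends by (auto intro: strict_mono_on_leD[OF 1])
    then show ?thesis
      using u v range[OF ends(1)] range[OF ends(2)] by auto
  next
    case 2
    have "\<phi> v \<le> \<phi> \<alpha>" "\<phi> \<beta> \<le> \<phi> u"
      using u v ends monotone_onD[OF 2] by (auto simp: le_less)
    then show ?thesis
      using u v range[OF ends(1)] range[OF ends(2)] by auto
  qed
  then show "\<phi> (\<phi> \<alpha>) = \<alpha>" and "\<phi> (\<phi> \<beta>) = \<beta>"
    by auto
qed

lemma Icc_subset_image_continuous:
  fixes g :: "real \<Rightarrow> real"
  assumes "continuous_on {a..b} g" and "a \<le> b"
  shows "{g a..g b} \<subseteq> g ` {a..b}" and "{g b..g a} \<subseteq> g ` {a..b}"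
proof -
  have "connected (g ` {a..b})"
    using assms(1) by (rule connected_continuous_image) simp
  moreover have "g a \<in> g ` {a..b}" "g b \<in> g ` {a..b}"
    using assms(2) by auto
  ultimately show "{g a..g b} \<subseteq> g ` {a..b}" and "{g b..g a} \<subseteq> g ` {a..b}"
    by (simp_all add: connected_contains_Icc)
qed

lemma two_covering_intervals:
  fixes g :: "real \<Rightarrow> real"
  assumes cont: "continuous_on {p..q} g" and "p < s" "s < q"
    and "g p \<le> p" "g q < p" "q \<le> g s"
  obtains a0 a1 b0 b1 where "p \<le> a0" "a0 \<le> a1" "a1 < s" "s < b0" "b0 \<le> b1" "b1 \<le> q"
    and "{a0..a1} \<union> {b0..b1} \<subseteq> g ` {a0..a1}" and "{a0..a1} \<union> {b0..b1} \<subseteq> g ` {b0..b1}"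
proof -
  have cont_sub: "continuous_on {x..y} g" if "p \<le> x" "y \<le> q" for x y
    using cont by (rule continuous_on_subset) (use that in auto)
  \<comment> \<open>\<open>[u0, x0]\<close> and \<open>[x1, u1]\<close> are both mapped onto \<open>[p, u1]\<close>\<close>
  obtain u0 where u0: "p \<le> u0" "u0 \<le> s" "g u0 = p"
    using IVT'[of g p p s] assms cont_sub[of p s] by auto
  obtain u1 where u1: "s \<le> u1" "u1 \<le> q" "g u1 = p"
    using IVT2'[of g q p s] assms cont_sub[of s q] by auto
  have "s < u1" "u1 < q"
    using u1 assms by (auto simp: le_less)
  obtain x0 where x0: "u0 \<le> x0" "x0 \<le> s" "g x0 = u1"
    using IVT'[of g u0 u1 s] u0 u1 assms cont_sub[of u0 s] by auto
  obtain x1 where x1: "s \<le> x1" "x1 \<le> u1" "g x1 = u1"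
    using IVT2'[of g u1 u1 s] u1 assms cont_sub[of s u1] by auto
  have "x0 < s" "s < x1"
    using x0 x1 \<open>u1 < q\<close> assms by (auto simp: le_less)
  have sub: "{u0..x0} \<union> {x1..u1} \<subseteq> {p..u1}"
    using u0 x0 x1 \<open>x0 < s\<close> \<open>s < u1\<close> by auto
  have "{g u0..g x0} \<subseteq> g ` {u0..x0}"
    using u0 x0 assms by (intro Icc_subset_image_continuous(1) cont_sub) auto
  then have cover_A: "{u0..x0} \<union> {x1..u1} \<subseteq> g ` {u0..x0}"
    using sub u0 x0 by (metis subset_trans)
  have "{g u1..g x1} \<subseteq> g ` {x1..u1}"
    using u1 x1 assms by (intro Icc_subset_image_continuous(2) cont_sub) auto
  then have cover_B: "{u0..x0} \<union> {x1..u1} \<subseteq> g ` {x1..u1}"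
    using sub u1 x1 by (metis subset_trans)
  show ?thesis
    by (rule that[OF _ _ _ _ _ _ cover_A cover_B]) (use u0 x0 x1 u1 \<open>x0 < s\<close> \<open>s < x1\<close> in auto)
qed

lemma third_less_dist_either:
  fixes u v w :: "'a::metric_space"
  assumes "0 < c" and "c \<le> dist u v"
  shows "c / 3 < dist w u \<or> c / 3 < dist w v"
  using dist_triangle3[of u v w] assms by argo

lemma inj_on_image_singleton:
  assumes "inj_on g S" and "g ` S = {w}" and "S \<noteq> {}"
  shows "\<exists>z. S = {z}"
proof -
  obtain z where z: "z \<in> S"
    using assms(3) by blast
  have "y = z" if "y \<in> S" for y
    using assms(1,2) that z by (metis inj_onD singletonD image_eqI)
  then show ?thesis
    using z by blast
qed

section \<open>Binary sequences\<close>

lemma funpow_shift: "(shift ^^ n) s = (\<lambda>j. s (j + n))"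
  by (induction n) (simp_all add: shift_def)

lemma uncountable_bool_sequences: "uncountable (UNIV :: (nat \<Rightarrow> bool) set)"
proof
  assume "countable (UNIV :: (nat \<Rightarrow> bool) set)"
  then have "range (from_nat_into (UNIV :: (nat \<Rightarrow> bool) set)) = UNIV"
    by simp
  then obtain k where k: "(\<lambda>n. \<not> from_nat_into UNIV n n) = from_nat_into (UNIV :: (nat \<Rightarrow> bool) set) k"
    by (metis UNIV_I imageE)
  have "(\<not> from_nat_into (UNIV :: (nat \<Rightarrow> bool) set) k k) = from_nat_into (UNIV :: (nat \<Rightarrow> bool) set) k k"
    using fun_cong[OF k, of k] by simp
  then show False
    by simp
qed

lemma uncountable_cylinder: "uncountable {s :: nat \<Rightarrow> bool. \<forall>j\<le>N. s j = w j}"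
proof
  assume countable: "countable {s :: nat \<Rightarrow> bool. \<forall>j\<le>N. s j = w j}"
  define prefix where "prefix = (\<lambda>\<alpha> :: nat \<Rightarrow> bool. \<lambda>j. if j \<le> N then w j else \<alpha> (j - Suc N))"
  have "inj prefix"
  proof
    fix \<alpha> \<beta>
    assume "prefix \<alpha> = prefix \<beta>"
    then have "prefix \<alpha> (i + Suc N) = prefix \<beta> (i + Suc N)" for i
      by simp
    then show "\<alpha> = \<beta>"
      by (auto simp: prefix_def)
  qed
  moreover have "range prefix \<subseteq> {s. \<forall>j\<le>N. s j = w j}"
    by (auto simp: prefix_def)
  then have "countable (range prefix)"
    using countable countable_subset by blast
  ultimately show False
    using countable_image_inj_on uncountable_bool_sequences by blast
qed

lemma shift_dist_le_if_agree:
  assumes "\<forall>j<N. a j = b j"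
  shows "shift_dist a b \<le> 2 * (1 / 2) ^ N"
proof -
  define t where "t = (\<lambda>i. \<bar>of_bool (a i) - of_bool (b i)\<bar> / (2 :: real) ^ i)"
  have t_le: "t i \<le> (1 / 2) ^ i" for i
    by (auto simp: t_def power_one_over)
  have geometric: "summable (\<lambda>i. (1 / 2 :: real) ^ i)"
    by (rule summable_geometric) simp
  have "summable t"
    by (rule summable_comparison_test[OF _ geometric]) (auto simp: t_def power_one_over)
  have "suminf t = (\<Sum>i. t (i + N)) + (\<Sum>i<N. t i)"
    by (rule suminf_split_initial_segment[OF \<open>summable t\<close>])
  also have "(\<Sum>i<N. t i) = 0"
    using assms by (simp add: t_def)
  also have "(\<Sum>i. t (i + N)) \<le> (\<Sum>i. (1 / 2) ^ (i + N))"
    using \<open>summable t\<close> geometric t_le by (intro suminf_le) (simp_all add: summable_iff_shift)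
  also have "(\<Sum>i. (1 / 2 :: real) ^ (i + N)) = (1 / 2) ^ N * 2"
    using suminf_mult[OF geometric, of "(1 / 2) ^ N"]
    by (simp add: power_add mult.commute suminf_geometric)
  finally show ?thesis
    by (simp add: shift_dist_def t_def)
qed

(* Block k occupies the positions [4^k, 4^k + 4k) and reads: the first k bits of u, then k ones, then the
   first k bits of \<alpha>, then k zeros. The copies of u make all these sequences agree on longer and longer
   stretches, the copies of \<alpha> separate distinct \<alpha> infinitely often, and the long runs of ones and zeros
   rule out agreement with any periodic sequence. *)
definition scramble :: "(nat \<Rightarrow> bool) \<Rightarrow> (nat \<Rightarrow> bool) \<Rightarrow> nat \<Rightarrow> bool" where
  "scramble u \<alpha> n \<longleftrightarrow>
     (\<exists>k j. j < k \<and> (n = 4 ^ k + j \<and> u j \<or> n = 4 ^ k + k + j \<or> n = 4 ^ k + 2 * k + j \<and> \<alpha> j))"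

lemma four_pow_add_le_four_pow_Suc: "4 ^ k + 4 * k \<le> (4 :: nat) ^ Suc k"
proof (induction k)
  case (Suc k)
  have "4 * k \<le> 3 * 4 ^ k" "1 \<le> (4 :: nat) ^ k"
    using Suc by simp_all
  then have "4 + 4 * k \<le> 12 * 4 ^ k"
    by linarith
  then show ?case
    by simp
qed simp

lemma le_four_pow: "k \<le> (4 :: nat) ^ k"
proof -
  have "k < 2 ^ k"
    by (rule less_exp)
  also have "(2 :: nat) ^ k \<le> 4 ^ k"
    by (rule power_mono) auto
  finally show ?thesis
    by simp
qed

lemma scramble_block_unique:
  assumes "4 ^ k + i = 4 ^ k' + i'" and "i < 4 * k" and "i' < 4 * k'"
  shows "k = (k' :: nat)"
proof (rule ccontr)
  have less: False if "4 ^ k + i = 4 ^ k' + i'" "i < 4 * k" "k < k'" for k k' i i' :: nat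
  proof -
    have "4 ^ k + i < 4 ^ Suc k"
      using four_pow_add_le_four_pow_Suc[of k] that(2) by linarith
    also have "(4 :: nat) ^ Suc k \<le> 4 ^ k'"
      using that(3) by (intro power_increasing) auto
    finally show False
      using that(1) by linarith
  qed
  assume "k \<noteq> k'"
  then show False
    using less[of k i k' i'] less[of k' i' k i] assms by (metis linorder_neqE_nat)
qed

lemma scramble_block:
  assumes "i < 4 * k"
  shows "scramble u \<alpha> (4 ^ k + i) \<longleftrightarrow>
    i < k \<and> u i \<or> k \<le> i \<and> i < 2 * k \<or> 2 * k \<le> i \<and> i < 3 * k \<and> \<alpha> (i - 2 * k)"
proof
  assume "scramble u \<alpha> (4 ^ k + i)"
  then obtain k' j where "j < k'" and
    "4 ^ k + i = 4 ^ k' + j \<and> u j \<or> 4 ^ k + i = 4 ^ k' + k' + j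
       \<or> 4 ^ k + i = 4 ^ k' + 2 * k' + j \<and> \<alpha> j"
    unfolding scramble_def by blast
  moreover have same_block: "k = k'" if "4 ^ k + i = 4 ^ k' + c * k' + j" "c \<le> 2" for c
  proof -
    have "c * k' \<le> 2 * k'"
      using that(2) by (rule mult_le_mono1)
    then have "c * k' + j < 4 * k'"
      using \<open>j < k'\<close> by linarith
    then show ?thesis
      using scramble_block_unique[OF _ assms] that(1) by (simp add: add.assoc)
  qed
  ultimately show "i < k \<and> u i \<or> k \<le> i \<and> i < 2 * k \<or> 2 * k \<le> i \<and> i < 3 * k \<and> \<alpha> (i - 2 * k)"
    by (elim disjE conjE) (fastforce dest: same_block[of 0] same_block[of 1] same_block[of 2])+
next
  assume "i < k \<and> u i \<or> k \<le> i \<and> i < 2 * k \<or> 2 * k \<le> i \<and> i < 3 * k \<and> \<alpha> (i - 2 * k)"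
  then show "scramble u \<alpha> (4 ^ k + i)"
  proof (elim disjE conjE)
    assume "k \<le> i" "i < 2 * k"
    then have "4 ^ k + i = 4 ^ k + k + (i - k)" "i - k < k"
      by auto
    then show ?thesis
      unfolding scramble_def by blast
  next
    assume "2 * k \<le> i" "i < 3 * k" "\<alpha> (i - 2 * k)"
    then have "4 ^ k + i = 4 ^ k + 2 * k + (i - 2 * k)" "i - 2 * k < k"
      by auto
    then show ?thesis
      using \<open>\<alpha> (i - 2 * k)\<close> unfolding scramble_def by blast
  qed (auto simp: scramble_def)
qed

lemma scramble_prefix: "j < k \<Longrightarrow> scramble u \<alpha> (j + 4 ^ k) = u j"
  using scramble_block[of j k u \<alpha>] by (simp add: add.commute)

lemma scramble_ones: "j < k \<Longrightarrow> scramble u \<alpha> (4 ^ k + k + j)"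
  using scramble_block[of "k + j" k u \<alpha>] by (simp add: add.assoc)

lemma scramble_copy: "j < k \<Longrightarrow> scramble u \<alpha> (4 ^ k + 2 * k + j) = \<alpha> j"
  using scramble_block[of "2 * k + j" k u \<alpha>] by (simp add: add.assoc)

lemma scramble_zeros: "j < k \<Longrightarrow> \<not> scramble u \<alpha> (4 ^ k + 3 * k + j)"
  using scramble_block[of "3 * k + j" k u \<alpha>] by (simp add: add.assoc)

lemma scramble_differs_frequently:
  assumes "\<alpha> \<noteq> \<beta>"
  shows "\<exists>n\<ge>M. scramble u \<alpha> n \<noteq> scramble u \<beta> n"
proof -
  obtain j where j: "\<alpha> j \<noteq> \<beta> j"
    using assms by blast
  define k where "k = Suc (j + M)"
  have "j < k" "M \<le> 4 ^ k"
    using le_four_pow[of k] by (simp_all add: k_def)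
  then show ?thesis
    using scramble_copy[OF \<open>j < k\<close>, of u \<alpha>] scramble_copy[OF \<open>j < k\<close>, of u \<beta>] j
    by (intro exI[of _ "4 ^ k + 2 * k + j"]) auto
qed

lemma periodic_false_if_false_on_window:
  fixes v :: "nat \<Rightarrow> bool"
  assumes periodic: "\<And>j. v (j + q) = v j" and "0 < q" and window: "\<And>i. i < q \<Longrightarrow> \<not> v (z + i)"
  shows "\<not> v n"
proof -
  have v_mult: "v (j + q * c) = v j" for j c
  proof (induction c)
    case (Suc c)
    have "j + q * Suc c = (j + q * c) + q"
      by simp
    then show ?case
      using periodic Suc.IH by metis
  qed simp
  define w where "w = n + q * z - z"
  have "z \<le> q * z"
    using \<open>0 < q\<close> by simp
  then have "n + q * z = z + w"
    unfolding w_def by linarith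
  have "v n = v (n + q * z)"
    by (simp add: v_mult)
  also have "\<dots> = v (z + w mod q + q * (w div q))"
    using \<open>n + q * z = z + w\<close> by (simp add: add.assoc)
  also have "\<dots> = v (z + w mod q)"
    by (rule v_mult)
  finally show ?thesis
    using window \<open>0 < q\<close> by simp
qed

lemma scramble_differs_from_periodic:
  assumes periodic: "\<And>j. v (j + q) = v j" and "0 < q"
  shows "\<exists>n\<ge>M. scramble u \<alpha> n \<noteq> v n"
proof (rule ccontr)
  assume "\<not> ?thesis"
  then have eq: "\<And>n. M \<le> n \<Longrightarrow> scramble u \<alpha> n = v n"
    by auto
  \<comment> \<open>a block of \<open>k > q\<close> zeros makes the periodic \<open>v\<close> vanish, contradicting the ones that follow\<close>
  define k where "k = M + q + 1"
  define z where "z = 4 ^ k + 3 * k"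
  have "M \<le> z"
    using le_four_pow[of k] by (simp add: k_def z_def)
  have zeros: "\<not> v (z + i)" if "i < q" for i
    using eq[of "z + i"] scramble_zeros[of i k u \<alpha>] that \<open>M \<le> z\<close> by (simp add: k_def z_def)
  have "\<not> v n" for n
    using periodic_false_if_false_on_window[OF periodic \<open>0 < q\<close> zeros] .
  moreover have "scramble u \<alpha> (4 ^ Suc k + Suc k + 0)"
    by (rule scramble_ones) simp
  moreover have "M \<le> 4 ^ Suc k + Suc k + 0"
    using le_four_pow[of "Suc k"] by (simp add: k_def)
  ultimately show False
    using eq by metis
qed

lemma limsup_gt_zero_if_frequently_ge:
  assumes "0 < c" and "\<And>M. \<exists>n\<ge>M. c \<le> X n"
  shows "0 < limsup (\<lambda>n. ereal (X n))"
proof -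
  have "ereal c \<le> limsup (\<lambda>n. ereal (X n))"
    unfolding limsup_INF_SUP
  proof (rule INF_greatest)
    fix M :: nat
    obtain n where "n \<ge> M" "c \<le> X n"
      using assms(2) by blast
    then show "ereal c \<le> (SUP n\<in>{M..}. ereal (X n))"
      by (intro SUP_upper2[of n]) auto
  qed
  moreover have "0 < ereal c"
    using assms(1) by simp
  ultimately show ?thesis
    by (metis less_le_trans)
qed

lemma liminf_eq_zero_if_frequently_lt:
  assumes "\<And>n. 0 \<le> X n" and "\<And>e M. 0 < e \<Longrightarrow> \<exists>n\<ge>M. X n < e"
  shows "liminf (\<lambda>n. ereal (X n)) = 0"
proof (rule antisym)
  show "liminf (\<lambda>n. ereal (X n)) \<le> 0"
  proof (rule ereal_le_epsilon2)
    fix e :: real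
    assume "0 < e"
    show "liminf (\<lambda>n. ereal (X n)) \<le> 0 + ereal e"
      unfolding liminf_SUP_INF
    proof (rule SUP_least)
      fix M :: nat
      obtain n where "n \<ge> M" "X n < e"
        using assms(2) \<open>0 < e\<close> by blast
      then show "(INF n\<in>{M..}. ereal (X n)) \<le> 0 + ereal e"
        by (intro INF_lower2[of n]) auto
    qed
  qed
  show "0 \<le> liminf (\<lambda>n. ereal (X n))"
    unfolding liminf_SUP_INF by (rule SUP_upper2[of 0]) (auto intro!: INF_greatest simp: assms(1))
qed

section \<open>Horseshoes\<close>

locale horseshoe =
  fixes f :: "real \<Rightarrow> real" and m :: nat and a0 a1 b0 b1 :: real
  assumes continuous_f: "continuous_on UNIV f"
    and m_pos: "0 < m"
    and intervals: "a0 \<le> a1" "a1 < b0" "b0 \<le> b1"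
    and mono_A: "strict_mono_on {a0..a1} (f ^^ m)"
    and antimono_B: "strict_antimono_on {b0..b1} (f ^^ m)"
    and covers_A: "{a0..a1} \<union> {b0..b1} \<subseteq> (f ^^ m) ` {a0..a1}"
    and covers_B: "{a0..a1} \<union> {b0..b1} \<subseteq> (f ^^ m) ` {b0..b1}"
begin

abbreviation G where "G \<equiv> f ^^ m"

definition cell :: "(nat \<Rightarrow> bool) \<Rightarrow> nat \<Rightarrow> real set" where
  "cell s j = (if s j then {b0..b1} else {a0..a1})"

definition itin :: "real \<Rightarrow> nat \<Rightarrow> bool" where
  "itin x = (\<lambda>j. (G ^^ j) x \<in> {b0..b1})"

definition Lambda :: "real set" where
  "Lambda = {x. \<forall>j. (G ^^ j) x \<in> {a0..a1} \<union> {b0..b1}}"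

definition cylinder :: "(nat \<Rightarrow> bool) \<Rightarrow> nat \<Rightarrow> real set" where
  "cylinder s n = {x. \<forall>j\<le>n. (G ^^ j) x \<in> cell s j}"

definition fiber :: "(nat \<Rightarrow> bool) \<Rightarrow> real set" where
  "fiber s = {x. \<forall>j. (G ^^ j) x \<in> cell s j}"

lemma continuous_on_iterate: "continuous_on UNIV (G ^^ j)"
  using continuous_on_funpow[OF continuous_on_funpow[OF continuous_f]] .

lemma cell_shift [simp]: "cell ((shift ^^ n) s) j = cell s (j + n)"
  by (simp add: cell_def funpow_shift)

lemma closed_cell: "closed (cell s j)"
  by (simp add: cell_def)

lemma cell_subset: "cell s j \<subseteq> {a0..a1} \<union> {b0..b1}"
  by (auto simp: cell_def)

lemma cell_nonempty: "cell s j \<noteq> {}"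
  using intervals by (auto simp: cell_def)

lemma is_interval_cell: "is_interval (cell s j)"
  by (simp add: cell_def is_interval_cc)

lemma cell_covered: "{a0..a1} \<union> {b0..b1} \<subseteq> G ` cell s j"
  using covers_A covers_B by (simp add: cell_def)

lemma strictly_monotone_on_cell: "strictly_monotone_on (cell s j) G"
  using mono_A antimono_B by (simp add: cell_def strictly_monotone_on_def)

lemma gap_le_dist:
  assumes "x \<in> {a0..a1} \<union> {b0..b1}" "y \<in> {a0..a1} \<union> {b0..b1}" "(x \<in> {b0..b1}) \<noteq> (y \<in> {b0..b1})"
  shows "b0 - a1 \<le> dist x y"
  using assms intervals by (auto simp: dist_real_def)

lemma fiber_iff: "x \<in> fiber s \<longleftrightarrow> x \<in> Lambda \<and> itin x = s"
proof
  assume x: "x \<in> fiber s"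
  then have "x \<in> Lambda"
    using cell_subset unfolding fiber_def Lambda_def by blast
  moreover have "itin x j = s j" for j
    using x intervals by (auto simp: fiber_def itin_def cell_def split: if_splits dest!: spec[of _ j])
  ultimately show "x \<in> Lambda \<and> itin x = s"
    by auto
next
  assume "x \<in> Lambda \<and> itin x = s"
  then show "x \<in> fiber s"
    by (auto simp: Lambda_def itin_def fiber_def cell_def)
qed

lemma iterate_iterate: "(G ^^ j) ((G ^^ k) x) = (G ^^ (j + k)) x"
  by (simp add: funpow_add)

lemma itin_iterate: "itin ((G ^^ n) x) = (shift ^^ n) (itin x)"
  by (simp add: itin_def funpow_shift funpow_add)

lemma iterate_in_Lambda: "x \<in> Lambda \<Longrightarrow> (G ^^ n) x \<in> Lambda"
  by (simp add: Lambda_def iterate_iterate)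

lemma Lambda_subset: "Lambda \<subseteq> {a0..a1} \<union> {b0..b1}"
proof
  fix x
  assume "x \<in> Lambda"
  then have "(G ^^ 0) x \<in> {a0..a1} \<union> {b0..b1}"
    unfolding Lambda_def by blast
  then show "x \<in> {a0..a1} \<union> {b0..b1}"
    by simp
qed

lemma compact_Lambda: "compact Lambda"
proof -
  have "Lambda = (\<Inter>j. (G ^^ j) -` ({a0..a1} \<union> {b0..b1}))"
    by (auto simp: Lambda_def)
  then have "closed Lambda"
    by (auto intro!: closed_vimage continuous_on_iterate)
  moreover have "bounded Lambda"
    using Lambda_subset bounded_subset by (metis bounded_Un bounded_closed_interval)
  ultimately show ?thesis
    by (simp add: compact_eq_bounded_closed)
qed

lemma closed_cylinder: "closed (cylinder s n)"
proof -
  have "cylinder s n = (\<Inter>j\<in>{..n}. (G ^^ j) -` cell s j)"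
    by (auto simp: cylinder_def)
  then show ?thesis
    by (auto intro!: closed_vimage continuous_on_iterate closed_cell)
qed

lemma cylinder_subset_cell: "cylinder s n \<subseteq> cell s 0"
  by (auto simp: cylinder_def)

lemma cylinder_antimono: "n \<le> k \<Longrightarrow> cylinder s k \<subseteq> cylinder s n"
  by (auto simp: cylinder_def)

lemma compact_cylinder: "compact (cylinder s n)"
proof -
  have "bounded (cell s 0)"
    by (simp add: cell_def)
  then show ?thesis
    using cylinder_subset_cell closed_cylinder bounded_subset by (metis compact_eq_bounded_closed)
qed

lemma fiber_eq_Inter_cylinder: "fiber s = (\<Inter>n. cylinder s n)"
  by (auto simp: fiber_def cylinder_def)

lemma fiber_subset_cylinder: "fiber s \<subseteq> cylinder s n"
  by (auto simp: fiber_def cylinder_def)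

lemma compact_fiber: "compact (fiber s)"
proof -
  have "closed (fiber s)"
    unfolding fiber_eq_Inter_cylinder by (auto intro: closed_cylinder)
  then have "compact (cylinder s 0 \<inter> fiber s)"
    by (rule compact_Int_closed[OF compact_cylinder])
  moreover have "cylinder s 0 \<inter> fiber s = fiber s"
    using fiber_subset_cylinder by blast
  ultimately show ?thesis
    by simp
qed

lemma cylinder_Suc: "x \<in> cylinder s (Suc n) \<longleftrightarrow> x \<in> cell s 0 \<and> G x \<in> cylinder (shift s) n"
proof -
  have "(\<forall>j\<le>Suc n. (G ^^ j) x \<in> cell s j) \<longleftrightarrow>
      x \<in> cell s 0 \<and> (\<forall>j\<le>n. (G ^^ Suc j) x \<in> cell s (Suc j))"
    by (simp only: less_Suc_eq_le[symmetric] All_less_Suc2 funpow_0)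
  then show ?thesis
    using cell_shift[of 1 s] by (simp add: cylinder_def funpow_Suc_right del: funpow.simps)
qed

lemma cylinder_onto_cell: "y \<in> cell s n \<Longrightarrow> \<exists>x\<in>cylinder s n. (G ^^ n) x = y"
proof (induction n arbitrary: s y)
  case 0
  then show ?case
    by (auto simp: cylinder_def)
next
  case (Suc n)
  then have "y \<in> cell (shift s) n"
    using cell_shift[of 1 s] by simp
  then obtain x' where x': "x' \<in> cylinder (shift s) n" "(G ^^ n) x' = y"
    using Suc.IH by blast
  have "x' \<in> cell (shift s) 0"
    using x' cylinder_subset_cell by blast
  then have "x' \<in> cell s 1"
    using cell_shift[of 1 s 0] by simp
  then have "x' \<in> G ` cell s 0"
    using cell_covered cell_subset by blast
  then obtain x where "x \<in> cell s 0" "G x = x'"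
    by blast
  then show ?case
    using x' cylinder_Suc by (auto simp: funpow_Suc_right simp del: funpow.simps)
qed

lemma fiber_nonempty: "fiber s \<noteq> {}"
proof -
  have "cylinder s n \<noteq> {}" for n
    using cylinder_onto_cell[of _ s n] cell_nonempty by blast
  then show ?thesis
    unfolding fiber_eq_Inter_cylinder
    by (intro compact_nest) (auto simp: compact_cylinder cylinder_antimono)
qed

lemma fiber_Suc: "x \<in> fiber s \<longleftrightarrow> x \<in> cell s 0 \<and> G x \<in> fiber (shift s)"
proof -
  have split: "(\<forall>j. P j) \<longleftrightarrow> P 0 \<and> (\<forall>j. P (Suc j))" for P :: "nat \<Rightarrow> bool"
    by (metis not0_implies_Suc)
  show ?thesis
    using split[of "\<lambda>j. (G ^^ j) x \<in> cell s j"]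
    using cell_shift[of 1 s] by (simp add: fiber_def funpow_Suc_right del: funpow.simps)
qed

lemma image_G_fiber: "G ` fiber s = fiber (shift s)"
proof
  show "G ` fiber s \<subseteq> fiber (shift s)"
    using fiber_Suc by blast
  show "fiber (shift s) \<subseteq> G ` fiber s"
  proof
    fix y
    assume y: "y \<in> fiber (shift s)"
    then have "y \<in> cell s 1"
      using fiber_subset_cylinder[of "shift s" 0] cylinder_subset_cell[of "shift s" 0] cell_shift[of 1 s 0]
      by auto
    then obtain x where "x \<in> cell s 0" "G x = y"
      using cell_covered cell_subset by blast
    then show "y \<in> G ` fiber s"
      using y fiber_Suc by blast
  qed
qed

lemma image_iterate_fiber: "(G ^^ n) ` fiber s = fiber ((shift ^^ n) s)"
proof (induction n arbitrary: s)
  case (Suc n)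
  have "(G ^^ Suc n) ` fiber s = (G ^^ n) ` (G ` fiber s)"
    by (simp only: funpow_Suc_right image_comp)
  also have "\<dots> = fiber ((shift ^^ n) (shift s))"
    by (simp only: image_G_fiber Suc.IH)
  also have "(shift ^^ n) (shift s) = (shift ^^ Suc n) s"
    by (simp only: funpow_Suc_right comp_apply)
  finally show ?case .
qed simp

lemma strictly_monotone_on_fiber: "strictly_monotone_on (fiber s) (G ^^ n)"
proof (induction n arbitrary: s)
  case 0
  then show ?case
    by (simp add: strictly_monotone_on_def strict_mono_on_def monotone_on_def)
next
  case (Suc n)
  have "strictly_monotone_on (fiber s) G"
    using strictly_monotone_on_cell fiber_subset_cylinder cylinder_subset_cell
    by (blast intro: strictly_monotone_on_subset)
  then have "strictly_monotone_on (fiber s) ((G ^^ n) \<circ> G)"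
    using image_G_fiber Suc.IH by (intro strictly_monotone_on_comp) auto
  then show ?case
    by (simp only: funpow_Suc_right)
qed

lemma is_interval_cylinder: "is_interval (cylinder s n)"
proof (induction n arbitrary: s)
  case 0
  have "cylinder s 0 = cell s 0"
    by (auto simp: cylinder_def)
  then show ?case
    using is_interval_cell by simp
next
  case (Suc n)
  show ?case
    unfolding is_interval_1
  proof (intro ballI allI impI)
    fix x z y
    assume xz: "x \<in> cylinder s (Suc n)" "z \<in> cylinder s (Suc n)" and y: "x \<le> y \<and> y \<le> z"
    have "x \<in> cell s 0" "z \<in> cell s 0"
      using xz cylinder_Suc by auto
    then have cell: "x \<in> cell s 0" "z \<in> cell s 0" "y \<in> cell s 0"
      using y is_interval_cell[unfolded is_interval_1] by blast+
    have "G x \<in> cylinder (shift s) n" "G z \<in> cylinder (shift s) n"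
      using xz cylinder_Suc by auto
    moreover have "min (G x) (G z) \<le> G y \<and> G y \<le> max (G x) (G z)"
      using strictly_monotone_on_between[OF strictly_monotone_on_cell cell(1,3,2)] y by blast
    moreover have "min (G x) (G z) \<in> cylinder (shift s) n" "max (G x) (G z) \<in> cylinder (shift s) n"
      using calculation(1,2) by (simp_all add: min_def max_def)
    ultimately have "G y \<in> cylinder (shift s) n"
      using Suc.IH[of "shift s", unfolded is_interval_1] by blast
    then show "y \<in> cylinder s (Suc n)"
      using cylinder_Suc cell(3) by blast
  qed
qed

lemma fiber_eq_Icc: "\<exists>\<alpha> \<beta>. \<alpha> \<le> \<beta> \<and> fiber s = {\<alpha>..\<beta>}"
proof -
  have "is_interval (fiber s)"
    unfolding is_interval_1
  proof (intro ballI allI impI)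
    fix x z y
    assume "x \<in> fiber s" "z \<in> fiber s" "x \<le> y \<and> y \<le> z"
    then have "y \<in> cylinder s n" for n
      using fiber_subset_cylinder is_interval_cylinder[of s n, unfolded is_interval_1] by blast
    then show "y \<in> fiber s"
      unfolding fiber_eq_Inter_cylinder by blast
  qed
  then obtain \<alpha> \<beta> where "fiber s = cbox \<alpha> \<beta>"
    using compact_fiber[of s] is_interval_compact[of "fiber s"] by auto
  then have "fiber s = {\<alpha>..\<beta>}"
    by simp
  then show ?thesis
    using fiber_nonempty[of s] by auto
qed

lemma cylinder_subset_open:
  assumes "open U" and "fiber s \<subseteq> U"
  shows "\<exists>N. cylinder s N \<subseteq> U"
proof (rule ccontr)
  assume "\<nexists>N. cylinder s N \<subseteq> U"
  then have "\<Inter> (range (\<lambda>n. cylinder s n - U)) \<noteq> {}"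
  proof (intro compact_nest)
    show "compact (cylinder s n - U)" for n
      using assms(1) compact_cylinder by (simp add: compact_diff)
    show "cylinder s n - U \<noteq> {}" for n
      using \<open>\<nexists>N. cylinder s N \<subseteq> U\<close> by blast
    show "cylinder s n - U \<subseteq> cylinder s k - U" if "k \<le> n" for k n
      using cylinder_antimono[OF that] by blast
  qed
  then show False
    using assms(2) unfolding fiber_eq_Inter_cylinder by blast
qed

lemma in_cylinder_if_itin_agrees: "x \<in> Lambda \<Longrightarrow> \<forall>j\<le>N. itin x j = s j \<Longrightarrow> x \<in> cylinder s N"
  by (auto simp: Lambda_def itin_def cylinder_def cell_def)

definition thick :: "(nat \<Rightarrow> bool) set" where
  "thick = {s. \<nexists>z. fiber s = {z}}"

(* Fibers of distinct itineraries are disjoint, and a fiber that is not a point contains a rational. *)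
lemma countable_thick: "countable thick"
proof -
  have "\<exists>q\<in>\<rat>. q \<in> fiber s" if "s \<in> thick" for s
  proof -
    obtain \<alpha> \<beta> where "fiber s = {\<alpha>..\<beta>}" "\<alpha> \<le> \<beta>"
      using fiber_eq_Icc by blast
    moreover have "\<alpha> \<noteq> \<beta>"
      using that calculation by (auto simp: thick_def)
    ultimately show ?thesis
      using Rats_dense_in_real[of \<alpha> \<beta>] by force
  qed
  then obtain q where q: "\<And>s. s \<in> thick \<Longrightarrow> q s \<in> \<rat> \<and> q s \<in> fiber s"
    by metis
  have "inj_on q thick"
  proof (rule inj_onI)
    fix s t
    assume "s \<in> thick" "t \<in> thick" "q s = q t"
    then have "q s \<in> fiber s" "q s \<in> fiber t"
      using q[of s] q[of t] by auto
    then show "s = t"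
      by (simp add: fiber_iff)
  qed
  moreover have "q ` thick \<subseteq> \<rat>"
    using q by blast
  then have "countable (q ` thick)"
    using countable_rat countable_subset by blast
  ultimately show ?thesis
    using countable_image_inj_on by blast
qed

lemma exists_thin_itinerary: "\<exists>s. (\<forall>j\<le>N. s j = w j) \<and> (\<exists>z. fiber s = {z})"
proof (rule ccontr)
  assume "\<not> ?thesis"
  then have "{s. \<forall>j\<le>N. s j = w j} \<subseteq> thick"
    by (auto simp: thick_def)
  then show False
    using countable_thick uncountable_cylinder countable_subset by blast
qed

lemma itin_locally_constant:
  assumes "y \<in> Lambda"
  shows "\<exists>d>0. \<forall>y'\<in>Lambda. dist y' y < d \<longrightarrow> (\<forall>j<N. itin y' j = itin y j)"
proof -
  have "\<forall>j\<in>{..<N}. \<forall>\<^sub>F y' in at y. dist ((G ^^ j) y') ((G ^^ j) y) < b0 - a1"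
  proof
    fix j
    have "isCont (G ^^ j) y"
      using continuous_on_iterate continuous_on_eq_continuous_at by blast
    then show "\<forall>\<^sub>F y' in at y. dist ((G ^^ j) y') ((G ^^ j) y) < b0 - a1"
      using intervals by (intro tendstoD) (simp_all add: isCont_def)
  qed
  then have "\<forall>\<^sub>F y' in at y. \<forall>j\<in>{..<N}. dist ((G ^^ j) y') ((G ^^ j) y) < b0 - a1"
    by (intro eventually_ball_finite) auto
  then obtain d where "d > 0" and d: "\<And>y'. y' \<noteq> y \<Longrightarrow> dist y' y < d \<Longrightarrow>
      \<forall>j\<in>{..<N}. dist ((G ^^ j) y') ((G ^^ j) y) < b0 - a1"
    unfolding eventually_at by blast
  have "itin y' j = itin y j" if "y' \<in> Lambda" "dist y' y < d" "j < N" for y' j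
  proof (cases "y' = y")
    case False
    then have "dist ((G ^^ j) y') ((G ^^ j) y) < b0 - a1"
      using d that by blast
    moreover have "(G ^^ j) y' \<in> {a0..a1} \<union> {b0..b1}" "(G ^^ j) y \<in> {a0..a1} \<union> {b0..b1}"
      using that(1) assms unfolding Lambda_def by auto
    ultimately show ?thesis
      unfolding itin_def by (meson gap_le_dist not_le)
  qed simp
  then show ?thesis
    using \<open>d > 0\<close> by blast
qed

theorem chaotic_BC:
  assumes "{a0..a1} \<union> {b0..b1} \<subseteq> X"
  shows "BC_chaotic X f"
  unfolding BC_chaotic_def
proof (intro exI[of _ m] exI[of _ Lambda] exI[of _ itin] conjI)
  show "1 \<le> m" "Lambda \<subseteq> X" "compact Lambda"
    using m_pos assms Lambda_subset compact_Lambda by auto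
  show "G ` Lambda \<subseteq> Lambda"
    using iterate_in_Lambda[of _ 1] by auto
  show "\<forall>y\<in>Lambda. itin (G y) = shift (itin y)"
    using itin_iterate[of 1] by simp
  show "\<forall>y\<in>Lambda. \<forall>e>0. \<exists>d>0. \<forall>y'\<in>Lambda. dist y' y < d \<longrightarrow> shift_dist (itin y') (itin y) < e"
  proof (intro ballI allI impI)
    fix y e :: real
    assume "y \<in> Lambda" "0 < e"
    then obtain N where N: "(1 / 2 :: real) ^ N < e / 2"
      using real_arch_pow_inv[of "e / 2" "1 / 2"] by auto
    obtain d where "d > 0" and d: "\<forall>y'\<in>Lambda. dist y' y < d \<longrightarrow> (\<forall>j<N. itin y' j = itin y j)"
      using itin_locally_constant[OF \<open>y \<in> Lambda\<close>] by blast
    have "shift_dist (itin y') (itin y) < e" if "y' \<in> Lambda" "dist y' y < d" for y'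
      using shift_dist_le_if_agree[of N "itin y'" "itin y"] d that N by fastforce
    then show "\<exists>d>0. \<forall>y'\<in>Lambda. dist y' y < d \<longrightarrow> shift_dist (itin y') (itin y) < e"
      using \<open>d > 0\<close> by blast
  qed
  have "s \<in> itin ` Lambda" for s
  proof -
    obtain x where "x \<in> fiber s"
      using fiber_nonempty by blast
    then show ?thesis
      by (auto simp: fiber_iff)
  qed
  then show "itin ` Lambda = UNIV"
    by blast
qed

(* Determined points exist for every finite itinerary prefix; this is what makes G transitive, sensitive
   and with dense periodic points on their closure. *)
definition determined :: "real set" where
  "determined = {x \<in> Lambda. fiber (itin x) = {x}}"

definition core :: "real set" where
  "core = closure determined"

lemma core_subset_Lambda: "core \<subseteq> Lambda"
proof -
  have "determined \<subseteq> Lambda"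
    by (auto simp: determined_def)
  then show ?thesis
    unfolding core_def using compact_Lambda closure_minimal compact_imp_closed by blast
qed

lemma compact_core: "compact core"
proof -
  have "compact (Lambda \<inter> core)"
    unfolding core_def by (rule compact_Int_closed[OF compact_Lambda closed_closure])
  moreover have "Lambda \<inter> core = core"
    using core_subset_Lambda by blast
  ultimately show ?thesis
    by simp
qed

lemma determined_if_fiber_singleton:
  assumes "fiber s = {z}"
  shows "z \<in> determined"
proof -
  have "z \<in> Lambda" "itin z = s"
    using assms fiber_iff[of z s] by simp_all
  then show ?thesis
    using assms by (simp add: determined_def)
qed

lemma determined_with_itin_prefix:
  obtains z where "z \<in> determined" and "\<forall>j\<le>N. itin z j = w j"
proof -
  obtain s z where s: "\<forall>j\<le>N. s j = w j" and z: "fiber s = {z}"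
    using exists_thin_itinerary[of N w] by blast
  have "itin z = s"
    using z fiber_iff[of z s] by simp
  then show ?thesis
    using s by (intro that[OF determined_if_fiber_singleton[OF z]]) simp
qed

lemma image_G_core: "G ` core \<subseteq> core"
proof -
  have "G x \<in> determined" if "x \<in> determined" for x
  proof -
    have "fiber (shift (itin x)) = {G x}"
      using that image_G_fiber[of "itin x"] by (simp add: determined_def)
    then show ?thesis
      by (rule determined_if_fiber_singleton)
  qed
  then have "G ` determined \<subseteq> determined"
    by blast
  then have "G ` determined \<subseteq> core"
    using closure_subset unfolding core_def by blast
  moreover have "continuous_on core G"
    by (rule continuous_on_subset[OF continuous_on_funpow[OF continuous_f]]) simp
  ultimately show ?thesis
    unfolding core_def by (intro image_closure_subset) auto
qed

lemma close_if_itin_prefix_agrees: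
  assumes "x \<in> determined" and "0 < e"
  obtains N where "\<And>y. y \<in> Lambda \<Longrightarrow> \<forall>j\<le>N. itin y j = itin x j \<Longrightarrow> dist y x < e"
proof -
  have "fiber (itin x) \<subseteq> ball x e"
    using assms by (simp add: determined_def)
  then obtain N where N: "cylinder (itin x) N \<subseteq> ball x e"
    using cylinder_subset_open by blast
  show ?thesis
  proof (rule that)
    fix y
    assume "y \<in> Lambda" "\<forall>j\<le>N. itin y j = itin x j"
    then have "y \<in> ball x e"
      using in_cylinder_if_itin_agrees N by blast
    then show "dist y x < e"
      by (simp add: dist_commute)
  qed
qed

lemma fiber_singleton_if_shift_singleton:
  assumes "fiber ((shift ^^ n) t) = {w}"
  shows "\<exists>z. fiber t = {z}"
proof (rule inj_on_image_singleton)
  show "inj_on (G ^^ n) (fiber t)"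
    by (rule strictly_monotone_on_imp_inj_on[OF strictly_monotone_on_fiber])
  show "(G ^^ n) ` fiber t = {w}"
    using image_iterate_fiber[of n t] assms by simp
qed (rule fiber_nonempty)

lemma core_transitive:
  assumes "open U" "U \<inter> core \<noteq> {}" "open V" "V \<inter> core \<noteq> {}"
  shows "\<exists>n>0. \<exists>u\<in>U \<inter> core. (G ^^ n) u \<in> V \<inter> core"
proof -
  obtain x where x: "x \<in> U" "x \<in> determined"
    using assms(1,2) open_Int_closure_eq_empty unfolding core_def by blast
  obtain x' where x': "x' \<in> V" "x' \<in> determined"
    using assms(3,4) open_Int_closure_eq_empty unfolding core_def by blast
  obtain e where "e > 0" "ball x e \<subseteq> U"
    using assms(1) x(1) open_contains_ball by blast
  obtain N where N: "\<And>y. y \<in> Lambda \<Longrightarrow> \<forall>j\<le>N. itin y j = itin x j \<Longrightarrow> dist y x < e"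
    using close_if_itin_prefix_agrees[OF x(2) \<open>e > 0\<close>] by blast
  \<comment> \<open>the point following \<open>x\<close> for \<open>N + 1\<close> steps and then \<open>x'\<close> is unique, hence determined\<close>
  define t where "t = (\<lambda>j. if j \<le> N then itin x j else itin x' (j - Suc N))"
  have shift_t: "(shift ^^ Suc N) t = itin x'"
    by (simp add: t_def funpow_shift fun_eq_iff del: funpow.simps)
  have fiber_x': "fiber (itin x') = {x'}"
    using x'(2) by (simp add: determined_def)
  then obtain z where z: "fiber t = {z}"
    using fiber_singleton_if_shift_singleton[of "Suc N" t x'] shift_t by auto
  have "z \<in> Lambda" "itin z = t"
    using z fiber_iff[of z t] by simp_all
  then have "dist z x < e"
    using N[of z] by (simp add: t_def)
  then have "z \<in> U"
    using \<open>ball x e \<subseteq> U\<close> by (auto simp: dist_commute)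
  moreover have "(G ^^ Suc N) z = x'"
    using image_iterate_fiber[of "Suc N" t] z shift_t fiber_x' by simp
  moreover have "z \<in> core" "x' \<in> core"
    using determined_if_fiber_singleton[OF z] x'(2) closure_subset unfolding core_def by blast+
  ultimately show ?thesis
    using x'(1) by (intro exI[of _ "Suc N"]) auto
qed

lemma determined_near_core:
  assumes "x \<in> core" and "0 < e"
  obtains x' where "x' \<in> determined" and "dist x' x < e"
  using assms closure_approachable[of x determined] unfolding core_def by blast

lemma core_splits_nearby:
  assumes "x \<in> core" and "0 < e"
  obtains N y0 y1 where "0 < N" "y0 \<in> determined" "y1 \<in> determined" "dist y0 x < e" "dist y1 x < e"
    "(G ^^ N) y0 \<in> {a0..a1}" "(G ^^ N) y1 \<in> {b0..b1}"
proof -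
  obtain x' where x': "x' \<in> determined" "dist x' x < e / 2"
    using determined_near_core[OF assms(1), of "e / 2"] assms(2) by auto
  obtain N where N: "\<And>y. y \<in> Lambda \<Longrightarrow> \<forall>j\<le>N. itin y j = itin x' j \<Longrightarrow> dist y x' < e / 2"
    using close_if_itin_prefix_agrees[OF x'(1), of "e / 2"] assms(2) by auto
  have branch: "\<exists>y\<in>determined. dist y x < e \<and> itin y (Suc N) = c \<and> (G ^^ Suc N) y \<in> {a0..a1} \<union> {b0..b1}"
    for c
  proof -
    obtain y where y: "y \<in> determined" "\<forall>j\<le>Suc N. itin y j = (if j \<le> N then itin x' j else c)"
      using determined_with_itin_prefix[of "Suc N" "\<lambda>j. if j \<le> N then itin x' j else c"] by blast
    then have "y \<in> Lambda"
      by (simp add: determined_def)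
    then have "dist y x' < e / 2"
      using N[of y] y(2) by simp
    have "(G ^^ Suc N) y \<in> {a0..a1} \<union> {b0..b1}"
      using \<open>y \<in> Lambda\<close> unfolding Lambda_def by blast
    moreover have "dist y x < e"
      using \<open>dist y x' < e / 2\<close> x'(2) dist_triangle_half_l[of y x' e x] by (simp add: dist_commute)
    ultimately show ?thesis
      using y by auto
  qed
  obtain y0 where "y0 \<in> determined" "dist y0 x < e" "(G ^^ Suc N) y0 \<in> {a0..a1}"
    using branch[of False] by (auto simp: itin_def)
  moreover obtain y1 where "y1 \<in> determined" "dist y1 x < e" "(G ^^ Suc N) y1 \<in> {b0..b1}"
    using branch[of True] by (auto simp: itin_def)
  ultimately show ?thesis
    using that[of "Suc N"] by blast
qed

lemma fiber_endpoint_in_core: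
  assumes fiber: "fiber t = {\<alpha>..\<beta>}"
  shows "\<alpha> \<in> core \<or> \<beta> \<in> core"
proof (rule ccontr)
  assume "\<not> ?thesis"
  moreover have "open (- core)"
    using compact_core by (simp add: compact_imp_closed open_Compl)
  ultimately obtain e\<alpha> e\<beta> where "0 < e\<alpha>" "ball \<alpha> e\<alpha> \<subseteq> - core" "0 < e\<beta>" "ball \<beta> e\<beta> \<subseteq> - core"
    using open_contains_ball by (metis ComplI)
  define e where "e = min e\<alpha> e\<beta>"
  have "0 < e" and avoid: "ball \<alpha> e \<inter> core = {}" "ball \<beta> e \<inter> core = {}"
    using \<open>0 < e\<alpha>\<close> \<open>0 < e\<beta>\<close> \<open>ball \<alpha> e\<alpha> \<subseteq> - core\<close> \<open>ball \<beta> e\<beta> \<subseteq> - core\<close>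
    by (auto simp: e_def)
  \<comment> \<open>a determined point that follows \<open>t\<close> for a long time and then leaves \<open>fiber t\<close>
     must lie just outside \<open>[\<alpha>, \<beta>]\<close>\<close>
  have "fiber t \<subseteq> {\<alpha> - e<..<\<beta> + e}"
    using fiber \<open>0 < e\<close> by auto
  then obtain N where N: "cylinder t N \<subseteq> {\<alpha> - e<..<\<beta> + e}"
    using cylinder_subset_open[of "{\<alpha> - e<..<\<beta> + e}" t] by auto
  obtain z where z: "z \<in> determined" "\<forall>j\<le>Suc N. itin z j = (if j \<le> N then t j else \<not> t j)"
    using determined_with_itin_prefix[of "Suc N" "\<lambda>j. if j \<le> N then t j else \<not> t j"] by blast
  then have "z \<in> Lambda"
    by (simp add: determined_def)
  then have "z \<in> cylinder t N"
    using z(2) by (intro in_cylinder_if_itin_agrees) auto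
  moreover have "z \<notin> fiber t"
    using z(2) fiber_iff[of z t] by auto
  ultimately have "z \<in> ball \<alpha> e \<union> ball \<beta> e"
    using N fiber by (auto simp: dist_real_def)
  moreover have "z \<in> core"
    using z(1) closure_subset unfolding core_def by blast
  ultimately show False
    using avoid by blast
qed

lemma periodic_point_near_determined:
  assumes "x \<in> determined" and "0 < e"
  obtains p q where "p \<in> core" "dist p x < e" "0 < q" "(G ^^ q) p = p"
proof -
  obtain N where N: "\<And>y. y \<in> Lambda \<Longrightarrow> \<forall>j\<le>N. itin y j = itin x j \<Longrightarrow> dist y x < e"
    using close_if_itin_prefix_agrees[OF assms] by blast
  \<comment> \<open>\<open>G ^^ L\<close> maps the fiber of this \<open>L\<close>-periodic itinerary monotonically onto itself\<close>
  define L where "L = Suc N"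
  define t where "t = (\<lambda>j. itin x (j mod L))"
  obtain \<alpha> \<beta> where "\<alpha> \<le> \<beta>" and fiber: "fiber t = {\<alpha>..\<beta>}"
    using fiber_eq_Icc by blast
  have "(shift ^^ L) t = t"
    by (simp add: t_def funpow_shift)
  then have "(G ^^ L) ` {\<alpha>..\<beta>} = {\<alpha>..\<beta>}"
    using image_iterate_fiber[of L t] fiber by simp
  moreover have "strictly_monotone_on {\<alpha>..\<beta>} (G ^^ L)"
    using strictly_monotone_on_fiber[of t L] fiber by simp
  ultimately have period: "(G ^^ L) ((G ^^ L) \<alpha>) = \<alpha>" "(G ^^ L) ((G ^^ L) \<beta>) = \<beta>"
    using endpoints_period_two_if_strictly_monotone_onto \<open>\<alpha> \<le> \<beta>\<close> by blast+
  obtain p where p: "p \<in> core" "p = \<alpha> \<or> p = \<beta>"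
    using fiber_endpoint_in_core[OF fiber] by blast
  then have "p \<in> fiber t"
    using fiber \<open>\<alpha> \<le> \<beta>\<close> by auto
  then have "dist p x < e"
    using N[of p] fiber_iff[of p t] by (simp add: t_def L_def)
  moreover have "(G ^^ (L + L)) p = p"
    using period p(2) by (auto simp only: funpow_add comp_apply)
  ultimately show ?thesis
    by (intro that[OF p(1)]) (simp_all add: L_def del: funpow.simps)
qed

lemma periodic_point_near_core:
  assumes "x \<in> core" and "0 < e"
  obtains p q where "p \<in> core" "dist p x < e" "0 < q" "(G ^^ q) p = p"
proof -
  obtain x' where x': "x' \<in> determined" "dist x' x < e / 2"
    using determined_near_core[OF assms(1), of "e / 2"] assms(2) by auto
  obtain p q where "p \<in> core" "dist p x' < e / 2" "0 < q" "(G ^^ q) p = p"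
    using periodic_point_near_determined[OF x'(1), of "e / 2"] assms(2) by auto
  moreover have "dist p x < e"
    using \<open>dist p x' < e / 2\<close> x'(2) dist_triangle_half_l[of p x' e x] by (simp add: dist_commute)
  ultimately show ?thesis
    using that by blast
qed

lemma iterate_eq_funpow: "G ^^ n = f ^^ (m * n)"
  by (simp add: funpow_mult)

lemma funpow_f_eps_delta:
  assumes "0 < \<epsilon>"
  shows "\<exists>d>0. \<forall>y'. dist y' y < d \<longrightarrow> dist ((f ^^ k) y') ((f ^^ k) y) < \<epsilon>"
proof -
  have "isCont (f ^^ k) y"
    using continuous_on_funpow[OF continuous_f] continuous_on_eq_continuous_at by blast
  then show ?thesis
    using assms unfolding continuous_at_eps_delta by blast
qed

(* The core is only invariant under G = f ^^ m; its first m images under f form an f-invariant set. *)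
definition core_orbit :: "real set" where
  "core_orbit = (\<Union>e<m. (f ^^ e) ` core)"

lemma core_subset_core_orbit: "core \<subseteq> core_orbit"
proof -
  have "(f ^^ 0) ` core \<subseteq> core_orbit"
    using m_pos unfolding core_orbit_def by blast
  then show ?thesis
    by simp
qed

lemma compact_core_orbit: "compact core_orbit"
  unfolding core_orbit_def
proof (intro compact_UN)
  show "compact ((f ^^ e) ` core)" for e
    by (rule compact_continuous_image[OF continuous_on_subset[OF continuous_on_funpow[OF continuous_f]]
          compact_core]) simp
qed simp

lemma image_f_core_orbit: "f ` core_orbit \<subseteq> core_orbit"
proof
  fix x
  assume "x \<in> f ` core_orbit"
  then obtain e y where "e < m" "y \<in> core" and x: "x = (f ^^ Suc e) y"
    by (auto simp: core_orbit_def)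
  show "x \<in> core_orbit"
  proof (cases "Suc e < m")
    case True
    then show ?thesis
      unfolding core_orbit_def using x \<open>y \<in> core\<close> by blast
  next
    case False
    then have "Suc e = m"
      using \<open>e < m\<close> by simp
    then have "x = G y"
      using x by simp
    then show ?thesis
      using image_G_core \<open>y \<in> core\<close> core_subset_core_orbit by blast
  qed
qed

lemma core_orbit_open_pullback:
  assumes "openin (top_of_set core_orbit) U" and "U \<noteq> {}"
  obtains U0 e where "open U0" "e < m" "U0 \<inter> core \<noteq> {}" "\<And>y. y \<in> core \<inter> U0 \<Longrightarrow> (f ^^ e) y \<in> U"
proof -
  obtain T where "open T" and U: "U = core_orbit \<inter> T"
    using assms(1) openin_open by blast
  then obtain e y where "e < m" "y \<in> core" "(f ^^ e) y \<in> T"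
    using assms(2) by (auto simp: core_orbit_def)
  moreover have "open ((f ^^ e) -` T)"
    using \<open>open T\<close> continuous_on_funpow[OF continuous_f] by (rule open_vimage)
  moreover have "(f ^^ e) y' \<in> U" if "y' \<in> core \<inter> (f ^^ e) -` T" for y'
    using that \<open>e < m\<close> U by (auto simp: core_orbit_def)
  ultimately show ?thesis
    using that[of "(f ^^ e) -` T" e] by blast
qed

lemma core_orbit_transitive:
  assumes "openin (top_of_set core_orbit) U" "openin (top_of_set core_orbit) V" "U \<noteq> {}" "V \<noteq> {}"
  shows "\<exists>n>0. (f ^^ n) ` U \<inter> V \<noteq> {}"
proof -
  obtain U0 eU where U0: "open U0" "eU < m" "U0 \<inter> core \<noteq> {}" "\<And>y. y \<in> core \<inter> U0 \<Longrightarrow> (f ^^ eU) y \<in> U"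
    using core_orbit_open_pullback[OF assms(1,3)] by blast
  obtain V0 eV where V0: "open V0" "eV < m" "V0 \<inter> core \<noteq> {}" "\<And>y. y \<in> core \<inter> V0 \<Longrightarrow> (f ^^ eV) y \<in> V"
    using core_orbit_open_pullback[OF assms(2,4)] by blast
  obtain n u where "0 < n" "u \<in> U0 \<inter> core" "(G ^^ n) u \<in> V0 \<inter> core"
    using core_transitive[OF U0(1,3) V0(1,3)] by blast
  define k where "k = m * n + eV - eU"
  have "m \<le> m * n"
    using \<open>0 < n\<close> by simp
  then have "0 < k" "k + eU = eV + m * n"
    using U0(2) unfolding k_def by arith+
  have "(f ^^ k) ((f ^^ eU) u) = (f ^^ (k + eU)) u"
    by (simp add: funpow_add)
  also have "\<dots> = (f ^^ eV) ((G ^^ n) u)"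
    using \<open>k + eU = eV + m * n\<close> by (simp add: iterate_eq_funpow funpow_add)
  finally have "(f ^^ k) ((f ^^ eU) u) = (f ^^ eV) ((G ^^ n) u)" .
  then have "(f ^^ k) ((f ^^ eU) u) \<in> V"
    using V0(4) \<open>(G ^^ n) u \<in> V0 \<inter> core\<close> by auto
  moreover have "(f ^^ eU) u \<in> U"
    using U0(4) \<open>u \<in> U0 \<inter> core\<close> by blast
  ultimately show ?thesis
    using \<open>0 < k\<close> by blast
qed

lemma core_orbit_periodic_dense: "core_orbit \<subseteq> closure {p \<in> core_orbit. periodic_pt f p}"
proof
  fix x
  assume "x \<in> core_orbit"
  then obtain e y where "e < m" "y \<in> core" and x: "x = (f ^^ e) y"
    by (auto simp: core_orbit_def)
  have "\<exists>p'\<in>{p \<in> core_orbit. periodic_pt f p}. dist p' x < \<epsilon>" if \<epsilon>: "0 < \<epsilon>" for \<epsilon>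
  proof -
    obtain d where "0 < d" and d: "\<forall>y'. dist y' y < d \<longrightarrow> dist ((f ^^ e) y') ((f ^^ e) y) < \<epsilon>"
      using funpow_f_eps_delta[OF \<epsilon>] by blast
    obtain p q where "p \<in> core" "dist p y < d" "0 < q" "(G ^^ q) p = p"
      using periodic_point_near_core[OF \<open>y \<in> core\<close> \<open>0 < d\<close>] by blast
    then have "(f ^^ (m * q)) p = p" "0 < m * q"
      using m_pos by (simp_all add: iterate_eq_funpow)
    have "(f ^^ (m * q)) ((f ^^ e) p) = (f ^^ e) ((f ^^ (m * q)) p)"
      by (metis add.commute comp_apply funpow_add)
    then have "(f ^^ (m * q)) ((f ^^ e) p) = (f ^^ e) p"
      using \<open>(f ^^ (m * q)) p = p\<close> by simp
    then have "periodic_pt f ((f ^^ e) p)"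
      using \<open>0 < m * q\<close> unfolding periodic_pt_def by blast
    moreover have "(f ^^ e) p \<in> core_orbit"
      using \<open>p \<in> core\<close> \<open>e < m\<close> by (auto simp: core_orbit_def)
    moreover have "dist ((f ^^ e) p) x < \<epsilon>"
      using d \<open>dist p y < d\<close> x by blast
    ultimately show ?thesis
      by blast
  qed
  then show "x \<in> closure {p \<in> core_orbit. periodic_pt f p}"
    unfolding closure_approachable by blast
qed

lemma core_orbit_sensitive:
  "\<forall>x\<in>core_orbit. \<forall>\<epsilon>>0. \<exists>y\<in>core_orbit. dist x y < \<epsilon> \<and>
     (\<exists>n. (b0 - a1) / 3 < dist ((f ^^ n) x) ((f ^^ n) y))"
proof (intro ballI allI impI)
  fix x \<epsilon> :: real
  assume "x \<in> core_orbit" "0 < \<epsilon>"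
  then obtain e y where "e < m" "y \<in> core" and x: "x = (f ^^ e) y"
    by (auto simp: core_orbit_def)
  obtain d where "0 < d" and d: "\<forall>y'. dist y' y < d \<longrightarrow> dist ((f ^^ e) y') ((f ^^ e) y) < \<epsilon>"
    using funpow_f_eps_delta[OF \<open>0 < \<epsilon>\<close>] by blast
  obtain N y0 y1 where "0 < N" "y0 \<in> determined" "y1 \<in> determined" "dist y0 y < d" "dist y1 y < d"
    and in_A: "(G ^^ N) y0 \<in> {a0..a1}" and in_B: "(G ^^ N) y1 \<in> {b0..b1}"
    using core_splits_nearby[OF \<open>y \<in> core\<close> \<open>0 < d\<close>] by blast
  \<comment> \<open>after \<open>n\<close> more steps of \<open>f\<close>, the points have made exactly \<open>N\<close> steps of \<open>G\<close>\<close>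
  define n where "n = m * N - e"
  have "m \<le> m * N"
    using \<open>0 < N\<close> by simp
  then have "n + e = m * N"
    using \<open>e < m\<close> unfolding n_def by arith
  have shift: "(f ^^ n) ((f ^^ e) z) = (G ^^ N) z" for z
  proof -
    have "(f ^^ n) ((f ^^ e) z) = (f ^^ (n + e)) z"
      by (simp add: funpow_add)
    then show ?thesis
      using \<open>n + e = m * N\<close> by (simp add: iterate_eq_funpow)
  qed
  have "b0 - a1 \<le> dist ((G ^^ N) y0) ((G ^^ N) y1)"
    using in_A in_B intervals by (intro gap_le_dist) auto
  then have "(b0 - a1) / 3 < dist ((G ^^ N) y) ((G ^^ N) y0) \<or> (b0 - a1) / 3 < dist ((G ^^ N) y) ((G ^^ N) y1)"
    using intervals by (intro third_less_dist_either) auto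
  then have "(b0 - a1) / 3 < dist ((f ^^ n) x) ((f ^^ n) ((f ^^ e) y0))
      \<or> (b0 - a1) / 3 < dist ((f ^^ n) x) ((f ^^ n) ((f ^^ e) y1))"
    by (simp only: x shift)
  moreover have "(f ^^ e) y0 \<in> core_orbit" "(f ^^ e) y1 \<in> core_orbit"
    using \<open>y0 \<in> determined\<close> \<open>y1 \<in> determined\<close> \<open>e < m\<close> closure_subset
    unfolding core_orbit_def core_def by blast+
  moreover have "dist x ((f ^^ e) y0) < \<epsilon>" "dist x ((f ^^ e) y1) < \<epsilon>"
    using d \<open>dist y0 y < d\<close> \<open>dist y1 y < d\<close> x by (auto simp: dist_commute)
  ultimately show "\<exists>y'\<in>core_orbit. dist x y' < \<epsilon> \<and> (\<exists>n. (b0 - a1) / 3 < dist ((f ^^ n) x) ((f ^^ n) y'))"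
    by blast
qed

theorem chaotic_D:
  assumes "{a0..a1} \<union> {b0..b1} \<subseteq> X" and "f ` X \<subseteq> X"
  shows "D_chaotic X f"
  unfolding D_chaotic_def
proof (intro exI[of _ core_orbit] conjI)
  have "core \<subseteq> X"
    using core_subset_Lambda Lambda_subset assms(1) by blast
  then show "core_orbit \<subseteq> X"
    using funpow_image_subset[OF assms(2)] unfolding core_orbit_def by blast
  obtain z where "z \<in> determined"
    using determined_with_itin_prefix[of 0 "\<lambda>_. True"] by blast
  then show "core_orbit \<noteq> {}"
    using closure_subset core_subset_core_orbit unfolding core_def by blast
  show "compact core_orbit" "f ` core_orbit \<subseteq> core_orbit"
    by (rule compact_core_orbit image_f_core_orbit)+
  show "\<forall>U V. openin (top_of_set core_orbit) U \<and> openin (top_of_set core_orbit) V \<and> U \<noteq> {} \<and> V \<noteq> {}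
      \<longrightarrow> (\<exists>n>0. (f ^^ n) ` U \<inter> V \<noteq> {})"
    using core_orbit_transitive by blast
  show "core_orbit \<subseteq> closure {p \<in> core_orbit. periodic_pt f p}"
    by (rule core_orbit_periodic_dense)
  show "\<exists>\<delta>>0. \<forall>x\<in>core_orbit. \<forall>\<epsilon>>0. \<exists>y\<in>core_orbit. dist x y < \<epsilon> \<and> (\<exists>n. \<delta> < dist ((f ^^ n) x) ((f ^^ n) y))"
    using core_orbit_sensitive intervals by (intro exI[of _ "(b0 - a1) / 3"]) auto
qed

definition scrambled :: "(nat \<Rightarrow> bool) \<Rightarrow> (nat \<Rightarrow> bool) \<Rightarrow> real" where
  "scrambled u \<alpha> = (SOME x. x \<in> fiber (scramble u \<alpha>))"

lemma scrambled: "scrambled u \<alpha> \<in> Lambda" "itin (scrambled u \<alpha>) = scramble u \<alpha>"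
proof -
  have "scrambled u \<alpha> \<in> fiber (scramble u \<alpha>)"
    unfolding scrambled_def using fiber_nonempty by (simp add: some_in_eq)
  then show "scrambled u \<alpha> \<in> Lambda" "itin (scrambled u \<alpha>) = scramble u \<alpha>"
    by (simp_all add: fiber_iff)
qed

lemma inj_scrambled: "inj (scrambled u)"
proof
  fix \<alpha> \<beta>
  assume "scrambled u \<alpha> = scrambled u \<beta>"
  then have "scramble u \<alpha> = scramble u \<beta>"
    using scrambled(2)[of u \<alpha>] scrambled(2)[of u \<beta>] by simp
  then show "\<alpha> = \<beta>"
    using scramble_differs_frequently[of \<alpha> \<beta> 0 u] by auto
qed

lemma gap_le_dist_if_itin_differs:
  assumes "x \<in> Lambda" "y \<in> Lambda" "itin x n \<noteq> itin y n"
  shows "b0 - a1 \<le> dist ((f ^^ (m * n)) x) ((f ^^ (m * n)) y)"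
proof -
  have "(G ^^ n) x \<in> {a0..a1} \<union> {b0..b1}" "(G ^^ n) y \<in> {a0..a1} \<union> {b0..b1}"
    using assms(1,2) unfolding Lambda_def by blast+
  then show ?thesis
    using gap_le_dist assms(3) unfolding itin_def iterate_eq_funpow by blast
qed

lemma limsup_dist_pos_if_itin_differs_frequently:
  assumes "x \<in> Lambda" "y \<in> Lambda" "\<And>M. \<exists>n\<ge>M. itin x n \<noteq> itin y n"
  shows "0 < limsup (\<lambda>n. ereal (dist ((f ^^ n) x) ((f ^^ n) y)))"
proof (rule limsup_gt_zero_if_frequently_ge)
  show "0 < b0 - a1"
    using intervals by simp
  fix M
  obtain n where "M \<le> n" "itin x n \<noteq> itin y n"
    using assms(3) by blast
  have "n \<le> m * n"
    using m_pos by simp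
  then have "M \<le> m * n"
    using \<open>M \<le> n\<close> by linarith
  moreover have "b0 - a1 \<le> dist ((f ^^ (m * n)) x) ((f ^^ (m * n)) y)"
    using gap_le_dist_if_itin_differs[OF assms(1,2) \<open>itin x n \<noteq> itin y n\<close>] .
  ultimately show "\<exists>k\<ge>M. b0 - a1 \<le> dist ((f ^^ k) x) ((f ^^ k) y)"
    by blast
qed

lemma liminf_dist_scrambled:
  assumes "fiber u = {z}"
  shows "liminf (\<lambda>n. ereal (dist ((f ^^ n) (scrambled u \<alpha>)) ((f ^^ n) (scrambled u \<beta>)))) = 0"
proof (rule liminf_eq_zero_if_frequently_lt)
  fix e :: real and M :: nat
  assume "0 < e"
  then obtain N where N: "cylinder u N \<subseteq> ball z (e / 2)"
    using cylinder_subset_open[of "ball z (e / 2)" u] assms by auto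
  \<comment> \<open>at time \<open>4 ^ k\<close> both itineraries start with the first \<open>k\<close> bits of \<open>u\<close>\<close>
  define k where "k = Suc (N + M)"
  define n where "n = (4 :: nat) ^ k"
  have near: "dist ((G ^^ n) (scrambled u \<gamma>)) z < e / 2" for \<gamma>
  proof -
    have "\<forall>j\<le>N. itin ((G ^^ n) (scrambled u \<gamma>)) j = u j"
      using scramble_prefix[of _ k u \<gamma>] scrambled(2)
      by (simp add: itin_iterate funpow_shift n_def k_def)
    then have "(G ^^ n) (scrambled u \<gamma>) \<in> cylinder u N"
      using iterate_in_Lambda[OF scrambled(1)] by (intro in_cylinder_if_itin_agrees)
    then show ?thesis
      using N by (auto simp: dist_commute)
  qed
  have "dist ((G ^^ n) (scrambled u \<alpha>)) ((G ^^ n) (scrambled u \<beta>)) < e"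
    using near[of \<alpha>] near[of \<beta>] dist_triangle_half_r[of z _ e] by (simp add: dist_commute)
  moreover have "M \<le> k" "k \<le> n" "n \<le> m * n"
    using le_four_pow[of k] m_pos by (simp_all add: k_def n_def)
  then have "M \<le> m * n"
    by linarith
  ultimately show "\<exists>n\<ge>M. dist ((f ^^ n) (scrambled u \<alpha>)) ((f ^^ n) (scrambled u \<beta>)) < e"
    unfolding iterate_eq_funpow by blast
qed simp

lemma limsup_dist_periodic_outside_Lambda:
  assumes "x \<in> Lambda" "p \<notin> Lambda" "(G ^^ q) p = p" "0 < q"
  shows "0 < limsup (\<lambda>n. ereal (dist ((f ^^ n) x) ((f ^^ n) p)))"
proof -
  obtain j where j: "(G ^^ j) p \<notin> {a0..a1} \<union> {b0..b1}"
    using assms(2) unfolding Lambda_def by blast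
  have "open (- ({a0..a1} \<union> {b0..b1}))"
    by auto
  then obtain c where "0 < c" and c: "ball ((G ^^ j) p) c \<subseteq> - ({a0..a1} \<union> {b0..b1})"
    using j open_contains_ball by blast
  show ?thesis
  proof (rule limsup_gt_zero_if_frequently_ge[OF \<open>0 < c\<close>])
    fix M
    define n where "n = j + q * M"
    have "(G ^^ n) p = (G ^^ j) p"
      using funpow_fixpoint_mult[OF assms(3), of M] by (simp add: n_def funpow_add)
    moreover have "(G ^^ n) x \<in> {a0..a1} \<union> {b0..b1}"
      using assms(1) unfolding Lambda_def by blast
    then have "(G ^^ n) x \<notin> ball ((G ^^ j) p) c"
      using c by blast
    then have "c \<le> dist ((G ^^ n) x) ((G ^^ n) p)"
      using \<open>(G ^^ n) p = (G ^^ j) p\<close> by (simp add: dist_commute)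
    moreover have "M \<le> q * M" "q * M \<le> n" "n \<le> m * n"
      using assms(4) m_pos by (simp_all add: n_def)
    then have "M \<le> m * n"
      by linarith
    ultimately show "\<exists>n\<ge>M. c \<le> dist ((f ^^ n) x) ((f ^^ n) p)"
      unfolding iterate_eq_funpow by blast
  qed
qed

lemma limsup_dist_scrambled_periodic:
  assumes "periodic_pt f p"
  shows "0 < limsup (\<lambda>n. ereal (dist ((f ^^ n) (scrambled u \<alpha>)) ((f ^^ n) p)))"
proof -
  obtain q where "0 < q" and q: "(f ^^ q) p = p"
    using assms unfolding periodic_pt_def by blast
  then have "(G ^^ q) p = p"
    using funpow_fixpoint_mult[OF q, of m] by (simp add: iterate_eq_funpow mult.commute)
  show ?thesis
  proof (cases "p \<in> Lambda")
    case True
    have "itin p = (\<lambda>j. itin p (j + q))"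
      using itin_iterate[of q p] \<open>(G ^^ q) p = p\<close> by (simp add: funpow_shift)
    then have "itin p (j + q) = itin p j" for j
      by (metis (no_types))
    then have "\<exists>n\<ge>M. itin (scrambled u \<alpha>) n \<noteq> itin p n" for M
      using scramble_differs_from_periodic[of "itin p" q M u \<alpha>] \<open>0 < q\<close> scrambled(2) by auto
    then show ?thesis
      using limsup_dist_pos_if_itin_differs_frequently[OF scrambled(1) True] by blast
  next
    case False
    show ?thesis
      using limsup_dist_periodic_outside_Lambda[OF scrambled(1) False \<open>(G ^^ q) p = p\<close> \<open>0 < q\<close>] .
  qed
qed

theorem chaotic_LY:
  assumes "{a0..a1} \<union> {b0..b1} \<subseteq> X"
  shows "LY_chaotic X f"
proof -
  obtain u z where u: "fiber u = {z}"
    using exists_thin_itinerary[of 0 "\<lambda>_. True"] by blast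
  show ?thesis
    unfolding LY_chaotic_def
  proof (intro exI[of _ "range (scrambled u)"] conjI ballI impI)
    show "range (scrambled u) \<subseteq> X"
      using scrambled(1) Lambda_subset assms by blast
    show "uncountable (range (scrambled u))"
    proof
      assume "countable (range (scrambled u))"
      then have "countable (UNIV :: (nat \<Rightarrow> bool) set)"
        by (rule countable_image_inj_on[OF _ inj_scrambled])
      then show False
        using uncountable_bool_sequences by blast
    qed
    fix x y
    assume "x \<in> range (scrambled u)"
    then obtain \<alpha> where x: "x = scrambled u \<alpha>"
      by blast
    show "0 < limsup (\<lambda>n. ereal (dist ((f ^^ n) x) ((f ^^ n) p)))" if "p \<in> X" "periodic_pt f p" for p
      unfolding x using limsup_dist_scrambled_periodic[OF that(2)] .
    assume "y \<in> range (scrambled u)" and "x \<noteq> y"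
    then obtain \<beta> where y: "y = scrambled u \<beta>" and "\<alpha> \<noteq> \<beta>"
      using x by blast
    then have "\<exists>n\<ge>M. itin x n \<noteq> itin y n" for M
      using scramble_differs_frequently[of \<alpha> \<beta> M u] scrambled(2) x by simp
    then show "0 < limsup (\<lambda>n. ereal (dist ((f ^^ n) x) ((f ^^ n) y)))"
      using limsup_dist_pos_if_itin_differs_frequently scrambled(1) x y by blast
    show "liminf (\<lambda>n. ereal (dist ((f ^^ n) x) ((f ^^ n) y))) = 0"
      unfolding x y by (rule liminf_dist_scrambled[OF u])
  qed
qed

end

section \<open>The map fr\<close>

lemma exp_ge_taylor_sum:
  fixes x :: real
  assumes "0 \<le> x"
  shows "(\<Sum>k<n. x ^ k / fact k) \<le> exp x"
proof -
  obtain t where "exp x = (\<Sum>k<n. x ^ k / fact k) + exp t / fact n * x ^ n"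
    using Maclaurin_exp_le by blast
  moreover have "0 \<le> exp t / fact n * x ^ n"
    using assms by simp
  ultimately show ?thesis
    by linarith
qed

lemma exp_le_taylor_sum_div:
  fixes x :: real
  assumes "0 \<le> x" and "x ^ n / fact n < 1"
  shows "exp x \<le> (\<Sum>k<n. x ^ k / fact k) / (1 - x ^ n / fact n)"
proof -
  obtain t where t: "\<bar>t\<bar> \<le> \<bar>x\<bar>" "exp x = (\<Sum>k<n. x ^ k / fact k) + exp t / fact n * x ^ n"
    using Maclaurin_exp_le by blast
  have "exp t \<le> exp x"
    using t(1) assms(1) by (simp add: abs_le_iff)
  then have "exp t / fact n * x ^ n \<le> exp x * (x ^ n / fact n)"
    using assms(1) by (simp add: divide_right_mono mult_right_mono)
  moreover have "exp x * (1 - x ^ n / fact n) = exp x - exp x * (x ^ n / fact n)"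
    by (simp add: algebra_simps)
  ultimately have "exp x * (1 - x ^ n / fact n) \<le> (\<Sum>k<n. x ^ k / fact k)"
    using t(2) by linarith
  then show ?thesis
    using assms(2) by (simp add: pos_le_divide_eq)
qed

lemma exp_tangent_le: "exp x * (1 + (y - x)) \<le> exp (y :: real)"
proof -
  have "exp x * (1 + (y - x)) \<le> exp x * exp (y - x)"
    by (intro mult_left_mono exp_ge_add_one_self) simp
  then show ?thesis
    by (simp flip: exp_add)
qed

lemma exp_0_6_bounds: "1.8221 \<le> exp (0.6 :: real)" "exp (0.6 :: real) \<le> 1.8222"
proof -
  have "1.8221 \<le> (\<Sum>k<8. (0.6 :: real) ^ k / fact k)"
    by (simp add: eval_nat_numeral)
  also have "\<dots> \<le> exp 0.6"
    by (rule exp_ge_taylor_sum) simp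
  finally show "1.8221 \<le> exp (0.6 :: real)" .
  have "exp (0.6 :: real) \<le> (\<Sum>k<8. 0.6 ^ k / fact k) / (1 - 0.6 ^ 8 / fact 8)"
    by (rule exp_le_taylor_sum_div) (simp_all add: eval_nat_numeral)
  also have "\<dots> \<le> 1.8222"
    by (simp add: eval_nat_numeral)
  finally show "exp (0.6 :: real) \<le> 1.8222" .
qed

lemma exp_0_9_le: "exp (0.9 :: real) \<le> 2.4597"
proof -
  have "exp (0.9 :: real) \<le> (\<Sum>k<12. 0.9 ^ k / fact k) / (1 - 0.9 ^ 12 / fact 12)"
    by (rule exp_le_taylor_sum_div) (simp_all add: eval_nat_numeral)
  also have "\<dots> \<le> 2.4597"
    by (simp add: eval_nat_numeral)
  finally show ?thesis .
qed

lemma exp_2_7388_lt: "exp (2.7388 :: real) < 16"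
proof -
  have "exp (2.7388 :: real) \<le> (\<Sum>k<20. 2.7388 ^ k / fact k) / (1 - 2.7388 ^ 20 / fact 20)"
    by (rule exp_le_taylor_sum_div) (simp_all add: eval_nat_numeral)
  also have "\<dots> < 16"
    by (simp add: eval_nat_numeral)
  finally show ?thesis .
qed

lemma exp_3_4884_ge: "32 \<le> exp (3.4884 :: real)"
proof -
  have "32 \<le> (\<Sum>k<20. (3.4884 :: real) ^ k / fact k)"
    by (simp add: eval_nat_numeral)
  also have "\<dots> \<le> exp 3.4884"
    by (rule exp_ge_taylor_sum) simp
  finally show ?thesis .
qed

lemma exp_3_4888_le: "exp (3.4888 :: real) \<le> 32.98"
proof -
  have "exp (3.4888 :: real) \<le> (\<Sum>k<20. 3.4888 ^ k / fact k) / (1 - 3.4888 ^ 20 / fact 20)"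
    by (rule exp_le_taylor_sum_div) (simp_all add: eval_nat_numeral)
  also have "\<dots> \<le> 32.98"
    by (simp add: eval_nat_numeral)
  finally show ?thesis .
qed

lemma exp_4_8618_gt: "128 < exp (4.8618 :: real)"
proof -
  have "128 < (\<Sum>k<24. (4.8618 :: real) ^ k / fact k)"
    by (simp add: eval_nat_numeral)
  also have "\<dots> \<le> exp 4.8618"
    by (rule exp_ge_taylor_sum) simp
  finally show ?thesis .
qed

lemma fr_two: "fr r 2 = 4 * exp (r - 2)"
  by (simp add: fr_def)

lemma fr_fr_two: "fr r (fr r 2) = 16 * exp (3 * r - 4 - 4 * exp (r - 2))"
proof -
  have "exp (3 * r - 4 - 4 * exp (r - 2)) = exp (r - 2) * exp (r - 2) * exp (r - 4 * exp (r - 2))"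
    by (simp flip: exp_add)
  then show ?thesis
    by (simp add: fr_def power2_eq_square)
qed

lemma fr_times_exp: "fr r x = x * (x * exp (r - x))"
  by (simp add: fr_def power2_eq_square)

lemma continuous_on_fr: "continuous_on S (fr r)"
  unfolding fr_def by (intro continuous_intros)

lemma fr_has_real_derivative: "(fr r has_real_derivative x * (2 - x) * exp (r - x)) (at x)"
  unfolding fr_def[abs_def]
  by (rule derivative_eq_intros refl | simp add: algebra_simps power2_eq_square)+

lemma fr_strict_mono_on: "strict_mono_on {0..2} (fr r)"
proof (rule strict_mono_onI)
  fix x y :: real
  assume "x \<in> {0..2}" "y \<in> {0..2}" "x < y"
  then show "fr r x < fr r y"
    by (intro DERIV_pos_imp_increasing_open[OF \<open>x < y\<close> _ continuous_on_fr])
      (auto intro!: exI fr_has_real_derivative mult_pos_pos)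
qed

lemma fr_strict_antimono_on: "strict_antimono_on {2..} (fr r)"
proof (rule monotone_onI)
  fix x y :: real
  assume "x \<in> {2..}" "y \<in> {2..}" "x < y"
  show "fr r y < fr r x"
  proof (rule DERIV_neg_imp_decreasing_open[OF \<open>x < y\<close> _ continuous_on_fr])
    fix t
    assume "x < t" "t < y"
    then have "t * (2 - t) * exp (r - t) < 0"
      using \<open>x \<in> {2..}\<close> by (intro mult_neg_pos mult_pos_neg) auto
    then show "\<exists>d. (fr r has_real_derivative d) (at t) \<and> d < 0"
      using fr_has_real_derivative by blast
  qed
qed

lemma fr_le_fr_two:
  assumes "0 \<le> x"
  shows "fr r x \<le> fr r 2"
proof (cases "x \<le> 2")
  case True
  then show ?thesis
    using assms by (intro strict_mono_on_leD[OF fr_strict_mono_on]) auto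
next
  case False
  then show ?thesis
    using monotone_onD[OF fr_strict_antimono_on, of 2 x r] by auto
qed

lemma fr_two_gt_two:
  assumes "2 \<le> r"
  shows "2 < fr r 2"
proof -
  have "1 \<le> exp (r - 2)"
    using assms by simp
  then have "2 < 4 * exp (r - 2)"
    by linarith
  then show ?thesis
    by (simp add: fr_two)
qed

(* The dependence on r is controlled by tangent lines of exp at r = 2.6 and r = 2.9, so exp only needs to be
   evaluated at the constants above. *)
lemma fr_fr_two_linearised:
  fixes r :: real
  assumes "2.6 \<le> r"
  obtains y where "4.2884 * (r - 2.6) \<le> y"
    and "3 * r - 4 - 4 * exp (r - 2) = 3.8 - 4 * exp 0.6 - y"
    and "fr r (fr r 2) = 16 * exp (3.8 - 4 * exp 0.6) * exp (- y)"
proof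
  define y where "y = 4 * (exp (r - 2) - exp 0.6) - 3 * (r - 2.6)"
  have "exp 0.6 * (1 + (r - 2.6)) \<le> exp (r - 2)"
    using exp_tangent_le[of "0.6" "r - 2"] by simp
  moreover have "1.8221 * (r - 2.6) \<le> exp 0.6 * (r - 2.6)"
    using exp_0_6_bounds assms by (intro mult_right_mono) auto
  ultimately show "4.2884 * (r - 2.6) \<le> y"
    unfolding y_def by (simp add: field_simps)
  show "3 * r - 4 - 4 * exp (r - 2) = 3.8 - 4 * exp 0.6 - y"
    by (simp add: y_def)
  then show "fr r (fr r 2) = 16 * exp (3.8 - 4 * exp 0.6) * exp (- y)"
    by (simp add: fr_fr_two mult.assoc flip: exp_add)
qed

lemma fr_fr_two_base_bounds:
  "16 / 32.98 \<le> 16 * exp (3.8 - 4 * exp (0.6 :: real))"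
  "16 * exp (3.8 - 4 * exp (0.6 :: real)) \<le> 1 / 2"
proof -
  have "1 / 32.98 \<le> exp (- 3.4888 :: real)"
    using exp_3_4888_le by (simp add: exp_minus field_simps)
  also have "\<dots> \<le> exp (3.8 - 4 * exp 0.6)"
    using exp_0_6_bounds by simp
  finally show "16 / 32.98 \<le> 16 * exp (3.8 - 4 * exp (0.6 :: real))"
    by simp
  have "exp (3.8 - 4 * exp (0.6 :: real)) \<le> exp (- 3.4884)"
    using exp_0_6_bounds by simp
  also have "\<dots> \<le> 1 / 32"
    using exp_3_4884_ge by (simp add: exp_minus field_simps)
  finally show "16 * exp (3.8 - 4 * exp (0.6 :: real)) \<le> 1 / 2"
    by simp
qed

lemma fr_fr_two_le_half:
  fixes r :: real
  assumes "2.6 \<le> r"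
  shows "fr r (fr r 2) \<le> 1 / 2"
proof -
  obtain y where y: "4.2884 * (r - 2.6) \<le> y"
    and a: "fr r (fr r 2) = 16 * exp (3.8 - 4 * exp 0.6) * exp (- y)"
    using fr_fr_two_linearised[OF assms] .
  have "exp (- y) \<le> 1"
    using y assms by simp
  then have "fr r (fr r 2) \<le> 16 * exp (3.8 - 4 * exp 0.6)"
    unfolding a by (simp add: mult_left_le)
  then show ?thesis
    using fr_fr_two_base_bounds(2) by linarith
qed

lemma fr_fr_fr_two_lt_two:
  fixes r :: real
  assumes "2.6 \<le> r"
  shows "fr r (fr r (fr r 2)) < 2"
proof -
  define a where "a = fr r (fr r 2)"
  define a0 where "a0 = 16 * exp (3.8 - 4 * exp (0.6 :: real))"
  define Q where "Q = 3 * r - 4 - 4 * exp (r - 2)"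
  obtain y where y: "4.2884 * (r - 2.6) \<le> y" and Q: "Q = 3.8 - 4 * exp 0.6 - y"
    and a_eq: "a = a0 * exp (- y)"
    using fr_fr_two_linearised[OF assms] unfolding a_def a0_def Q_def .
  have a0: "16 / 32.98 \<le> a0" "a0 \<le> 1 / 2"
    using fr_fr_two_base_bounds unfolding a0_def by simp_all
  \<comment> \<open>the exponent of \<open>f\<^sup>3(2)\<close> is \<open>2 Q + r - a\<close>; bound \<open>a\<close> from below by the tangent at \<open>y = 0\<close>\<close>
  have "a0 * (1 - y) \<le> a"
    unfolding a_eq using a0 exp_ge_add_one_self[of "- y"] by (intro mult_left_mono) auto
  moreover have "a0 * y \<le> 1 / 2 * y"
    using a0 y assms by (intro mult_right_mono) auto
  ultimately have "2 * Q + r - a \<le> - 4.8618"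
    using Q a0 y assms exp_0_6_bounds by (simp add: field_simps)
  then have "exp (2 * Q + r - a) \<le> exp (- 4.8618)"
    by simp
  also have "\<dots> < 1 / 128"
    using exp_4_8618_gt by (simp add: exp_minus field_simps)
  finally have "256 * exp (2 * Q + r - a) < 2"
    by simp
  moreover have "fr r a = 256 * exp (2 * Q + r - a)"
    by (simp add: fr_def a_def fr_fr_two Q_def power2_eq_square mult_ac flip: exp_add)
  ultimately show ?thesis
    by (simp add: a_def)
qed

lemma fr_fr_two_lt_fr_fr_fr_two:
  fixes r :: real
  assumes "2.6 \<le> r" and "r \<le> 2.9"
  shows "fr r (fr r 2) < fr r (fr r (fr r 2))"
proof -
  define a where "a = fr r (fr r 2)"
  define Q where "Q = 3 * r - 4 - 4 * exp (r - 2)"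
  have a_eq: "a = 16 * exp Q"
    by (simp add: a_def fr_fr_two Q_def)
  have "exp (r - 2) * (1 + (2.9 - r)) \<le> exp 0.9"
    using exp_tangent_le[of "r - 2" "0.9"] by simp
  moreover have "1 * (2.9 - r) \<le> exp (r - 2) * (2.9 - r)"
    using assms by (intro mult_right_mono) auto
  ultimately have "exp (r - 2) + (2.9 - r) \<le> 2.4597"
    using exp_0_9_le by (simp add: algebra_simps)
  then have "- 2.7388 \<le> Q + r - a"
    using fr_fr_two_le_half[OF assms(1)] unfolding Q_def a_def by (simp add: field_simps)
  then have "16 * exp (- 2.7388) \<le> 16 * exp (Q + r - a)"
    by simp
  moreover have "1 < 16 * exp (- 2.7388 :: real)"
    using exp_2_7388_lt by (simp add: exp_minus field_simps)
  ultimately have "1 < 16 * exp (Q + r - a)"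
    by linarith
  also have "\<dots> = a * exp (r - a)"
    by (simp add: a_eq mult.assoc flip: exp_add)
  finally have "1 < a * exp (r - a)" .
  then show ?thesis
    by (simp add: a_def a_eq fr_times_exp)
qed

lemma fr_nonneg: "0 \<le> fr r x"
  by (simp add: fr_def)

lemma funpow_2_apply: "(g ^^ 2) x = g (g x)"
  by (simp add: numeral_2_eq_2)

lemma fr_fr_strict_mono_on:
  assumes "fr r s = 2" and "2 \<le> s"
  shows "strict_mono_on {2..s} (fr r ^^ 2)"
proof (rule strict_mono_onI)
  fix x y :: real
  assume "x \<in> {2..s}" "y \<in> {2..s}" "x < y"
  then have "fr r y < fr r x" "fr r s \<le> fr r y"
    using monotone_onD[OF fr_strict_antimono_on, of x y r] monotone_onD[OF fr_strict_antimono_on, of y s r]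
    by (auto simp: le_less)
  then show "(fr r ^^ 2) x < (fr r ^^ 2) y"
    using monotone_onD[OF fr_strict_antimono_on, of "fr r y" "fr r x" r] assms(1)
    by (simp add: funpow_2_apply)
qed

lemma fr_fr_strict_antimono_on:
  assumes "fr r s = 2" and "2 \<le> s"
  shows "strict_antimono_on {s..} (fr r ^^ 2)"
proof (rule monotone_onI)
  fix x y :: real
  assume "x \<in> {s..}" "y \<in> {s..}" "x < y"
  then have "fr r y < fr r x" "fr r x \<le> fr r s"
    using monotone_onD[OF fr_strict_antimono_on, of x y r] monotone_onD[OF fr_strict_antimono_on, of s x r]
      assms(2) by (auto simp: le_less)
  then show "(fr r ^^ 2) y < (fr r ^^ 2) x"
    using strict_mono_onD[OF fr_strict_mono_on, of "fr r y" "fr r x" r] fr_nonneg[of r y] assms(1)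
    by (simp add: funpow_2_apply)
qed

lemma fr_horseshoe:
  fixes r :: real
  assumes "2.6 \<le> r" and "r \<le> 2.9"
  obtains a0 a1 b0 b1 where "horseshoe (fr r) 2 a0 a1 b0 b1" and "{a0..a1} \<union> {b0..b1} \<subseteq> {2..fr r 2}"
proof -
  define b where "b = fr r 2"
  have "2 < b" "fr r (fr r b) < 2"
    using fr_two_gt_two fr_fr_fr_two_lt_two assms by (auto simp: b_def)
  moreover have "fr r b < fr r (fr r b)"
    using fr_fr_two_lt_fr_fr_fr_two[OF assms] by (simp add: b_def)
  ultimately have "fr r b < 2"
    by linarith
  \<comment> \<open>\<open>f\<^sub>r\<^sup>2\<close> is unimodal on \<open>[2, b]\<close> with its peak at the preimage \<open>s\<close> of \<open>2\<close>\<close>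
  obtain s where "2 \<le> s" "s \<le> b" "fr r s = 2"
    using IVT2'[of "fr r" b 2 2] \<open>2 < b\<close> \<open>fr r b < 2\<close> continuous_on_fr by (force simp: b_def)
  then have "2 < s" "s < b"
    using \<open>2 < b\<close> \<open>fr r b < 2\<close> by (auto simp: b_def le_less)
  have "continuous_on {2..b} (fr r ^^ 2)"
    unfolding funpow_2_apply[abs_def] by (intro continuous_on_compose2[OF continuous_on_fr continuous_on_fr]) auto
  moreover have "(fr r ^^ 2) 2 \<le> 2" "(fr r ^^ 2) b < 2" "b \<le> (fr r ^^ 2) s"
    using \<open>fr r b < 2\<close> \<open>fr r (fr r b) < 2\<close> \<open>fr r s = 2\<close> by (simp_all add: funpow_2_apply b_def)
  ultimately obtain a0 a1 b0 b1 where "2 \<le> a0" "a0 \<le> a1" "a1 < s" "s < b0" "b0 \<le> b1" "b1 \<le> b"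
    and covers: "{a0..a1} \<union> {b0..b1} \<subseteq> (fr r ^^ 2) ` {a0..a1}" "{a0..a1} \<union> {b0..b1} \<subseteq> (fr r ^^ 2) ` {b0..b1}"
    using two_covering_intervals[of 2 b "fr r ^^ 2" s] \<open>2 < s\<close> \<open>s < b\<close> by blast
  have "horseshoe (fr r) 2 a0 a1 b0 b1"
  proof
    show "strict_mono_on {a0..a1} (fr r ^^ 2)"
      by (rule monotone_on_subset[OF fr_fr_strict_mono_on[OF \<open>fr r s = 2\<close> \<open>2 \<le> s\<close>]])
        (use \<open>2 \<le> a0\<close> \<open>a1 < s\<close> in auto)
    show "strict_antimono_on {b0..b1} (fr r ^^ 2)"
      by (rule monotone_on_subset[OF fr_fr_strict_antimono_on[OF \<open>fr r s = 2\<close> \<open>2 \<le> s\<close>]])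
        (use \<open>s < b0\<close> in auto)
  qed (use continuous_on_fr covers \<open>a0 \<le> a1\<close> \<open>a1 < s\<close> \<open>s < b0\<close> \<open>b0 \<le> b1\<close> in auto)
  moreover have "{a0..a1} \<union> {b0..b1} \<subseteq> {2..fr r 2}"
    using \<open>2 \<le> a0\<close> \<open>b1 \<le> b\<close> \<open>a0 \<le> a1\<close> \<open>a1 < s\<close> \<open>s < b0\<close> \<open>b0 \<le> b1\<close> by (auto simp: b_def)
  ultimately show ?thesis
    using that by blast
qed

lemma fr_image_Icc_subset:
  assumes "2 \<le> fr r 2" and "fr r (fr r 2) \<le> fr r (fr r (fr r 2))"
  shows "fr r ` {fr r (fr r 2)..fr r 2} \<subseteq> {fr r (fr r 2)..fr r 2}"
proof
  fix y
  assume "y \<in> fr r ` {fr r (fr r 2)..fr r 2}"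
  then obtain x where x: "fr r (fr r 2) \<le> x" "x \<le> fr r 2" and y: "y = fr r x"
    by auto
  have "0 \<le> x"
    using x(1) fr_nonneg[of r "fr r 2"] by linarith
  then have "fr r x \<le> fr r 2"
    by (rule fr_le_fr_two)
  moreover have "fr r (fr r 2) \<le> fr r x"
  proof (cases "x \<le> 2")
    case True
    then have "fr r (fr r (fr r 2)) \<le> fr r x"
      using x(1) fr_nonneg[of r "fr r 2"] by (intro strict_mono_on_leD[OF fr_strict_mono_on]) auto
    then show ?thesis
      using assms(2) by linarith
  next
    case False
    then show ?thesis
      using x(2) monotone_onD[OF fr_strict_antimono_on, of x "fr r 2" r] by (auto simp: le_less)
  qed
  ultimately show "y \<in> {fr r (fr r 2)..fr r 2}"
    using y by simp
qed

theorem proposition4p16: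
  fixes r :: real
  assumes "2.6 \<le> r" and "r \<le> 2.9"
  shows "(fr r ^^ 2) 2 < (fr r ^^ 3) 2 \<and> (fr r ^^ 3) 2 < 2 \<and> 2 < fr r 2
         \<and> fr r ` {(fr r ^^ 2) 2 .. fr r 2} \<subseteq> {(fr r ^^ 2) 2 .. fr r 2}
         \<and> LY_chaotic {(fr r ^^ 2) 2 .. fr r 2} (fr r)
         \<and> BC_chaotic {(fr r ^^ 2) 2 .. fr r 2} (fr r)
         \<and> D_chaotic {(fr r ^^ 2) 2 .. fr r 2} (fr r)"
proof -
  have orbit: "2 < fr r 2" "fr r (fr r 2) < fr r (fr r (fr r 2))" "fr r (fr r (fr r 2)) < 2"
    using fr_two_gt_two fr_fr_two_lt_fr_fr_fr_two[OF assms] fr_fr_fr_two_lt_two assms by auto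
  have iterates: "(fr r ^^ 2) 2 = fr r (fr r 2)" "(fr r ^^ 3) 2 = fr r (fr r (fr r 2))"
    by (simp_all add: numeral_eq_Suc)
  have invariant: "fr r ` {fr r (fr r 2)..fr r 2} \<subseteq> {fr r (fr r 2)..fr r 2}"
    using orbit by (intro fr_image_Icc_subset) auto
  obtain a0 a1 b0 b1 where hs: "horseshoe (fr r) 2 a0 a1 b0 b1"
    and "{a0..a1} \<union> {b0..b1} \<subseteq> {2..fr r 2}"
    using fr_horseshoe[OF assms] by blast
  then have horseshoe_in: "{a0..a1} \<union> {b0..b1} \<subseteq> {fr r (fr r 2)..fr r 2}"
    using orbit by fastforce
  show ?thesis
    unfolding iterates
    using orbit invariant horseshoe.chaotic_LY[OF hs horseshoe_in] horseshoe.chaotic_BC[OF hs horseshoe_in]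
      horseshoe.chaotic_D[OF hs horseshoe_in invariant]
    by auto
qed

end
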